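(* The total cost incurred by the augmenting-path algorithm for online generalized network flow over all times $t=1,\dots,T$ is at most $\sum_{t=1}^{T}\mathrm{height}_T(s_t)$.
   Context: Generalized network flow instance: digraph $G=(V,E)$ without anti-parallel edges, sources with no incoming edges, sink $\tau$ with no outgoing edges, edge capacities $\mu_e>0$, costs $c_e>0$, gains $\gamma_e>0$; convention: every vertex $v\ne\tau$ has a dummy edge $v\tau$ of infinite capacity, gain $1$ and sufficiently large cost $B$. Online generalized network flow: sources $s_1,\dots,s_T$ (each with supply $1$) arrive one at a time with their outgoing edges; the algorithm maintains valid flows $x^{(t)}$ (nonnegative, within capacities, with $\sum_{e\in\delta^+(v)}x_e-\sum_{e\in\delta^-(v)}\gamma_ex_e$ equal to $1$ at arrived sources and $0$ at other vertices $\ne\tau$) and incurs cost $\sum_ec_e(x^{(t)}_e-x^{(t-1)}_e)_+$ at time $t$. Residual graph $G^x$: forward edge $uv$ (capacity $\mu_{uv}-x_{uv}$, cost $c_{uv}$, gain $\gamma_{uv}$) if $x_{uv}<\mu_{uv}$; backward edge $vu$ (capacity $\gamma_{uv}x_{uv}$, cost $0$, gain $1/\gamma_{uv}$) if $x_{uv}>0$. A fractional augmenting path from $s\ne\tau$ in $G^x$ is $f\ge0$ on residual edges with out-minus-gain-weighted-in flow $1$ at $s$ and $0$ at vertices other than $s,\tau$; cost $\sum_ec^x_ef_e$. It is an augmenting path if its support is a path from $s$ to $\tau$, or a cycle through $s$ avoiding $\tau$, or a cycle avoiding $s,\tau$ plus a path from $s$ to it internally disjoint from it. Augmenting $x$ by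 $\theta$ using $f$: $x_{uv}\gets x_{uv}+\theta f_{uv}$ on forward residual edges, $x_{uv}\gets x_{uv}-\theta f_{vu}/\gamma_{uv}$ on backward residual edges $vu$. The augmenting-path algorithm: $x^{(0)}=0$; at time $t$, add $s_t$, start from $x^{(t-1)}$ (zero on new edges), and while the outflow of $s_t$ is less than $1$, augment by the largest feasible $\theta$ (keeping $0\le x_e\le\mu_e$ and outflow of $s_t$ at most $1$) along a cheapest augmenting path from $s_t$ in the current residual graph; the result is $x^{(t)}$. $\mathrm{height}_t(v)$ for $v\ne\tau$ is the minimum cost of an augmenting path from $v$ in $G^{x^{(t)}}$. *)

theory Defs
  imports Main "HOL-Library.Extended_Real"
begin

text \<open>Edges are abstract objects of type 'e with a source ("src") and target ("dst")
vertex. Capacities are extended reals (dummy edges have capacity infinity).\<close>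

record ('v, 'e) gnet =
  verts :: "'v set"
  edges :: "'e set"
  src   :: "'e \<Rightarrow> 'v"
  dst   :: "'e \<Rightarrow> 'v"
  sink  :: "'v"
  cap   :: "'e \<Rightarrow> ereal"
  cost  :: "'e \<Rightarrow> real"
  gain  :: "'e \<Rightarrow> real"

definition gnet_instance :: "('v, 'e) gnet \<Rightarrow> real \<Rightarrow> (nat \<Rightarrow> 'v) \<Rightarrow> nat \<Rightarrow> bool" where
  "gnet_instance N B s T \<longleftrightarrow>
     finite (verts N) \<and> finite (edges N) \<and> sink N \<in> verts N \<and>
     (\<forall>e\<in>edges N. src N e \<in> verts N \<and> dst N e \<in> verts N) \<and>
     \<comment> \<open>no anti-parallel edges (this also excludes loops)\<close>
     (\<forall>e\<in>edges N. \<forall>e'\<in>edges N. \<not> (src N e = dst N e' \<and> dst N e = src N e')) \<and>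
     \<comment> \<open>sink has no outgoing edges\<close>
     (\<forall>e\<in>edges N. src N e \<noteq> sink N) \<and>
     (\<forall>e\<in>edges N. cap N e > 0 \<and> cost N e > 0 \<and> gain N e > 0) \<and>
     \<comment> \<open>sources s_1..s_T: distinct vertices other than the sink, with no incoming edges\<close>
     inj_on s {1..T} \<and>
     (\<forall>t\<in>{1..T}. s t \<in> verts N \<and> s t \<noteq> sink N \<and> (\<forall>e\<in>edges N. dst N e \<noteq> s t)) \<and>
     \<comment> \<open>dummy edges: every vertex other than the sink has an edge to the sink of
        infinite capacity, gain 1 and cost B\<close>
     B > 0 \<and>
     (\<forall>v\<in>verts N - {sink N}. \<exists>e\<in>edges N. src N e = v \<and> dst N e = sink N \<and>
         cap N e = \<infinity> \<and> gain N e = 1 \<and> cost N e = B)"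

definition future :: "(nat \<Rightarrow> 'v) \<Rightarrow> nat \<Rightarrow> nat \<Rightarrow> 'v \<Rightarrow> bool" where
  "future s T t v \<longleftrightarrow> (\<exists>j\<in>{t<..T}. v = s j)"

definition edges_at :: "('v, 'e) gnet \<Rightarrow> (nat \<Rightarrow> 'v) \<Rightarrow> nat \<Rightarrow> nat \<Rightarrow> 'e set" where
  "edges_at N s T t = {e \<in> edges N. \<not> future s T t (src N e)}"

definition verts_at :: "('v, 'e) gnet \<Rightarrow> (nat \<Rightarrow> 'v) \<Rightarrow> nat \<Rightarrow> nat \<Rightarrow> 'v set" where
  "verts_at N s T t = {v \<in> verts N. \<not> future s T t v}"

definition outflow :: "('v, 'e) gnet \<Rightarrow> 'e set \<Rightarrow> ('e \<Rightarrow> real) \<Rightarrow> 'v \<Rightarrow> real" where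
  "outflow N A x v = (\<Sum>e\<in>{e\<in>A. src N e = v}. x e)"

definition gain_inflow :: "('v, 'e) gnet \<Rightarrow> 'e set \<Rightarrow> ('e \<Rightarrow> real) \<Rightarrow> 'v \<Rightarrow> real" where
  "gain_inflow N A x v = (\<Sum>e\<in>{e\<in>A. dst N e = v}. gain N e * x e)"

section \<open>Residual graph: residual edge (e,True) is forward, (e,False) is backward\<close>

definition res_edges :: "('v, 'e) gnet \<Rightarrow> 'e set \<Rightarrow> ('e \<Rightarrow> real) \<Rightarrow> ('e \<times> bool) set" where
  "res_edges N A x =
     {(e, True) | e. e \<in> A \<and> ereal (x e) < cap N e} \<union> {(e, False) | e. e \<in> A \<and> x e > 0}"

fun rsrc :: "('v, 'e) gnet \<Rightarrow> 'e \<times> bool \<Rightarrow> 'v" where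
  "rsrc N (e, b) = (if b then src N e else dst N e)"

fun rdst :: "('v, 'e) gnet \<Rightarrow> 'e \<times> bool \<Rightarrow> 'v" where
  "rdst N (e, b) = (if b then dst N e else src N e)"

fun rcost :: "('v, 'e) gnet \<Rightarrow> 'e \<times> bool \<Rightarrow> real" where
  "rcost N (e, b) = (if b then cost N e else 0)"

fun rgain :: "('v, 'e) gnet \<Rightarrow> 'e \<times> bool \<Rightarrow> real" where
  "rgain N (e, b) = (if b then gain N e else 1 / gain N e)"

definition frac_aug :: "('v, 'e) gnet \<Rightarrow> 'e set \<Rightarrow> 'v set \<Rightarrow> ('e \<Rightarrow> real) \<Rightarrow> 'v
     \<Rightarrow> ('e \<times> bool \<Rightarrow> real) \<Rightarrow> bool" where
  "frac_aug N A W x s f \<longleftrightarrow>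
     (\<forall>r. f r \<ge> 0) \<and> (\<forall>r. r \<notin> res_edges N A x \<longrightarrow> f r = 0) \<and>
     (\<forall>v\<in>W - {sink N}.
        (\<Sum>r\<in>{r\<in>res_edges N A x. rsrc N r = v}. f r)
        - (\<Sum>r\<in>{r\<in>res_edges N A x. rdst N r = v}. rgain N r * f r)
        = (if v = s then 1 else 0))"

definition supp :: "('v, 'e) gnet \<Rightarrow> 'e set \<Rightarrow> ('e \<Rightarrow> real) \<Rightarrow> ('e \<times> bool \<Rightarrow> real) \<Rightarrow> ('e \<times> bool) set" where
  "supp N A x f = {r \<in> res_edges N A x. f r > 0}"

definition rwalk :: "('v, 'e) gnet \<Rightarrow> ('e \<times> bool) list \<Rightarrow> 'v \<Rightarrow> 'v \<Rightarrow> bool" where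
  "rwalk N es u w \<longleftrightarrow> es \<noteq> [] \<and> rsrc N (hd es) = u \<and> rdst N (last es) = w \<and>
     (\<forall>i. Suc i < length es \<longrightarrow> rdst N (es ! i) = rsrc N (es ! Suc i))"

definition pverts :: "('v, 'e) gnet \<Rightarrow> ('e \<times> bool) list \<Rightarrow> 'v list" where
  "pverts N es = rsrc N (hd es) # map (rdst N) es"

definition simple_path :: "('v, 'e) gnet \<Rightarrow> ('e \<times> bool) list \<Rightarrow> 'v \<Rightarrow> 'v \<Rightarrow> bool" where
  "simple_path N es u w \<longleftrightarrow> rwalk N es u w \<and> distinct (pverts N es)"

definition simple_cycle :: "('v, 'e) gnet \<Rightarrow> ('e \<times> bool) list \<Rightarrow> bool" where
  "simple_cycle N es \<longleftrightarrow> es \<noteq> [] \<and> rwalk N es (rsrc N (hd es)) (rsrc N (hd es)) \<and>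
     distinct (map (rdst N) es)"

definition aug_path :: "('v, 'e) gnet \<Rightarrow> 'e set \<Rightarrow> 'v set \<Rightarrow> ('e \<Rightarrow> real) \<Rightarrow> 'v
     \<Rightarrow> ('e \<times> bool \<Rightarrow> real) \<Rightarrow> bool" where
  "aug_path N A W x s f \<longleftrightarrow> frac_aug N A W x s f \<and>
     ((\<exists>P. simple_path N P s (sink N) \<and> supp N A x f = set P) \<or>
      (\<exists>C. simple_cycle N C \<and> s \<in> set (map (rdst N) C) \<and> sink N \<notin> set (map (rdst N) C) \<and>
           supp N A x f = set C) \<or>
      (\<exists>C P w. simple_cycle N C \<and> s \<notin> set (map (rdst N) C) \<and> sink N \<notin> set (map (rdst N) C) \<and>
           simple_path N P s w \<and> set (pverts N P) \<inter> set (map (rdst N) C) = {w} \<and>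
           supp N A x f = set P \<union> set C))"

definition aug_cost :: "('v, 'e) gnet \<Rightarrow> 'e set \<Rightarrow> ('e \<Rightarrow> real) \<Rightarrow> ('e \<times> bool \<Rightarrow> real) \<Rightarrow> real" where
  "aug_cost N A x f = (\<Sum>r\<in>res_edges N A x. rcost N r * f r)"

definition height :: "('v, 'e) gnet \<Rightarrow> 'e set \<Rightarrow> 'v set \<Rightarrow> ('e \<Rightarrow> real) \<Rightarrow> 'v \<Rightarrow> real" where
  "height N A W x v = Inf {aug_cost N A x f | f. aug_path N A W x v f}"

definition cheapest_aug_path :: "('v, 'e) gnet \<Rightarrow> 'e set \<Rightarrow> 'v set \<Rightarrow> ('e \<Rightarrow> real) \<Rightarrow> 'v
     \<Rightarrow> ('e \<times> bool \<Rightarrow> real) \<Rightarrow> bool" where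
  "cheapest_aug_path N A W x s f \<longleftrightarrow> aug_path N A W x s f \<and>
     (\<forall>g. aug_path N A W x s g \<longrightarrow> aug_cost N A x f \<le> aug_cost N A x g)"

definition augment :: "('v, 'e) gnet \<Rightarrow> ('e \<Rightarrow> real) \<Rightarrow> real \<Rightarrow> ('e \<times> bool \<Rightarrow> real) \<Rightarrow> 'e \<Rightarrow> real" where
  "augment N x \<theta> f = (\<lambda>e. x e + \<theta> * f (e, True) - \<theta> * f (e, False) / gain N e)"

definition feasible_step :: "('v, 'e) gnet \<Rightarrow> 'e set \<Rightarrow> 'v \<Rightarrow> ('e \<Rightarrow> real) \<Rightarrow> ('e \<times> bool \<Rightarrow> real)
     \<Rightarrow> real \<Rightarrow> bool" where
  "feasible_step N A s x f \<theta> \<longleftrightarrow> \<theta> \<ge> 0 \<and>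
     (\<forall>e\<in>A. 0 \<le> augment N x \<theta> f e \<and> ereal (augment N x \<theta> f e) \<le> cap N e) \<and>
     outflow N A (augment N x \<theta> f) s \<le> 1"

definition aug_step :: "('v, 'e) gnet \<Rightarrow> 'e set \<Rightarrow> 'v set \<Rightarrow> 'v \<Rightarrow> ('e \<Rightarrow> real) \<Rightarrow> ('e \<Rightarrow> real) \<Rightarrow> bool" where
  "aug_step N A W s x x' \<longleftrightarrow> (\<exists>f \<theta>. cheapest_aug_path N A W x s f \<and>
     feasible_step N A s x f \<theta> \<and> (\<forall>\<theta>'. feasible_step N A s x f \<theta>' \<longrightarrow> \<theta>' \<le> \<theta>) \<and>
     x' = augment N x \<theta> f)"

text \<open>The processing of one arriving source: a finite run of the while loop from x to x'.\<close>
definition phase :: "('v, 'e) gnet \<Rightarrow> 'e set \<Rightarrow> 'v set \<Rightarrow> 'v \<Rightarrow> ('e \<Rightarrow> real) \<Rightarrow> ('e \<Rightarrow> real) \<Rightarrow> bool" where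
  "phase N A W s x x' \<longleftrightarrow> (\<exists>ys. ys \<noteq> [] \<and> hd ys = x \<and> last ys = x' \<and>
     (\<forall>i. Suc i < length ys \<longrightarrow> outflow N A (ys ! i) s < 1 \<and> aug_step N A W s (ys ! i) (ys ! Suc i)) \<and>
     \<not> outflow N A x' s < 1)"

text \<open>X t is the flow x^(t) maintained by the algorithm after the arrival of s_t.\<close>
definition alg_run :: "('v, 'e) gnet \<Rightarrow> (nat \<Rightarrow> 'v) \<Rightarrow> nat \<Rightarrow> (nat \<Rightarrow> 'e \<Rightarrow> real) \<Rightarrow> bool" where
  "alg_run N s T X \<longleftrightarrow> X 0 = (\<lambda>_. 0) \<and>
     (\<forall>t\<in>{1..T}. phase N (edges_at N s T t) (verts_at N s T t) (s t) (X (t - 1)) (X t))"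

definition step_cost :: "('v, 'e) gnet \<Rightarrow> ('e \<Rightarrow> real) \<Rightarrow> ('e \<Rightarrow> real) \<Rightarrow> real" where
  "step_cost N x x' = (\<Sum>e\<in>edges N. cost N e * max 0 (x' e - x e))"

end

theory Submission
  imports Defs
begin

text \<open>
  A feasible potential is a nonnegative \<open>p\<close> with \<open>p \<tau> = 0\<close> and
  \<open>p u \<le> c\<^sub>r + \<gamma>\<^sub>r p v\<close> for every residual edge \<open>r = uv\<close>. Its reduced costs telescope along
  any fractional augmenting path from \<open>u\<close>, so \<open>p u\<close> is a lower bound on the cost of such a
  path, and in particular on the height of \<open>u\<close>.

  The run of the algorithm is accompanied by feasible potentials that only grow. Before an
  augmentation from \<open>s\<close>, the potential is raised to the minimum cost of explicit augmenting
  walks ("lassos": a simple path to the sink, or a simple path followed by a simple cycle of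
  gain below 1). These values satisfy the Bellman inequalities, because prepending an edge to
  a lasso can be repaired into a lasso that is no more expensive, and at \<open>s\<close> they equal the
  cost of the cheapest augmenting path. By complementary slackness that path uses only tight
  edges, so after augmenting, the reverse edges are tight too and the potential stays feasible;
  an augmentation by \<open>\<theta>\<close> costs at most \<open>\<theta> p s\<close>. As the outflow of \<open>s\<^sub>t\<close> grows by at most 1
  while it is served, the cost at time \<open>t\<close> is at most the final potential of \<open>s\<^sub>t\<close>, which
  is at most \<open>height\<^sub>T(s\<^sub>t)\<close>.
\<close>

section \<open>Feasible potentials\<close>

definition feasible_potential :: "('v, 'e) gnet \<Rightarrow> 'e set \<Rightarrow> ('e \<Rightarrow> real) \<Rightarrow> ('v \<Rightarrow> real) \<Rightarrow> bool" where
  "feasible_potential N A x p \<longleftrightarrow> (\<forall>v. 0 \<le> p v) \<and> p (sink N) = 0 \<and>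
     (\<forall>r\<in>res_edges N A x. p (rsrc N r) \<le> rcost N r + rgain N r * p (rdst N r))"

locale residual_network =
  fixes N :: "('v, 'e) gnet" and A :: "'e set" and W :: "'v set"
  assumes finite_A: "finite A" and finite_W: "finite W"
    and ends_in_W: "\<And>e. e \<in> A \<Longrightarrow> src N e \<in> W \<and> dst N e \<in> W"
    and sink_in_W: "sink N \<in> W"
    and cost_gain_pos: "\<And>e. e \<in> A \<Longrightarrow> cost N e > 0 \<and> gain N e > 0"
    and dummy_edge: "\<And>v. v \<in> W \<Longrightarrow> v \<noteq> sink N \<Longrightarrow>
       \<exists>e\<in>A. src N e = v \<and> dst N e = sink N \<and> cap N e = \<infinity>"
begin

abbreviation R :: "('e \<Rightarrow> real) \<Rightarrow> ('e \<times> bool) set" where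
  "R x \<equiv> res_edges N A x"

abbreviation \<tau> :: 'v where
  "\<tau> \<equiv> sink N"

definition excess :: "('e \<Rightarrow> real) \<Rightarrow> ('e \<times> bool \<Rightarrow> real) \<Rightarrow> 'v \<Rightarrow> real" where
  "excess x f v = (\<Sum>r\<in>{r\<in>R x. rsrc N r = v}. f r) - (\<Sum>r\<in>{r\<in>R x. rdst N r = v}. rgain N r * f r)"

lemma res_edges_subset: "R x \<subseteq> A \<times> UNIV"
  unfolding res_edges_def by auto

lemma finite_res_edges: "finite (R x)"
  using finite_subset[OF res_edges_subset] finite_A by auto

lemma res_edge_in_A: "r \<in> R x \<Longrightarrow> fst r \<in> A"
  unfolding res_edges_def by auto

lemma rgain_pos: "r \<in> R x \<Longrightarrow> rgain N r > 0"
  using res_edge_in_A[of r x] cost_gain_pos by (cases r) auto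

lemma rcost_nonneg: "r \<in> R x \<Longrightarrow> rcost N r \<ge> 0"
  using res_edge_in_A[of r x] cost_gain_pos by (cases r) (auto simp: less_imp_le)

lemma rsrc_in_W: "r \<in> R x \<Longrightarrow> rsrc N r \<in> W"
  using res_edge_in_A[of r x] ends_in_W by (cases r) auto

lemma rdst_in_W: "r \<in> R x \<Longrightarrow> rdst N r \<in> W"
  using res_edge_in_A[of r x] ends_in_W by (cases r) auto

lemma frac_aug_iff_excess:
  "frac_aug N A W x v g \<longleftrightarrow> (\<forall>r. 0 \<le> g r) \<and> (\<forall>r. r \<notin> R x \<longrightarrow> g r = 0) \<and>
     (\<forall>u\<in>W - {\<tau>}. excess x g u = (if u = v then 1 else 0))"
  unfolding frac_aug_def excess_def ..

lemma frac_aug_excess: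
  "frac_aug N A W x s f \<Longrightarrow> v \<in> W - {\<tau>} \<Longrightarrow> excess x f v = (if v = s then 1 else 0)"
  unfolding frac_aug_def excess_def by auto

lemma sum_res_edges_by_vertex:
  fixes g :: "'e \<times> bool \<Rightarrow> real"
  assumes "\<And>r. r \<in> R x \<Longrightarrow> h r \<in> W"
  shows "(\<Sum>r\<in>R x. g r * p (h r)) = (\<Sum>v\<in>W. p v * (\<Sum>r\<in>{r\<in>R x. h r = v}. g r))"
proof -
  have "(\<Sum>v\<in>W. p v * (\<Sum>r\<in>{r\<in>R x. h r = v}. g r))
      = (\<Sum>v\<in>W. \<Sum>r\<in>{r\<in>R x. h r = v}. g r * p (h r))"
    unfolding sum_distrib_left by (intro sum.cong) (auto simp: mult.commute)
  also have "\<dots> = (\<Sum>r\<in>R x. g r * p (h r))"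
    by (rule sum.group) (use finite_res_edges finite_W assms in auto)
  finally show ?thesis by simp
qed

lemma frac_aug_reduced_cost_sum:
  assumes fa: "frac_aug N A W x s f" and s: "s \<in> W - {\<tau>}" and p_sink: "p \<tau> = 0"
  shows "(\<Sum>r\<in>R x. f r * (rcost N r + rgain N r * p (rdst N r) - p (rsrc N r)))
         = aug_cost N A x f - p s"
proof -
  have "p v * excess x f v = (if v = s then p v else 0)" if "v \<in> W" for v
    using frac_aug_excess[OF fa, of v] p_sink s that by (cases "v = \<tau>") auto
  then have "(\<Sum>v\<in>W. p v * excess x f v) = (\<Sum>v\<in>W. if v = s then p v else 0)"
    by (rule sum.cong[OF refl])
  also have "\<dots> = p s"
    using s finite_W by simp
  finally have excess_sum: "(\<Sum>v\<in>W. p v * excess x f v) = p s" .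
  have "(\<Sum>r\<in>R x. f r * (rcost N r + rgain N r * p (rdst N r) - p (rsrc N r)))
      = (\<Sum>r\<in>R x. rcost N r * f r + (rgain N r * f r) * p (rdst N r) - f r * p (rsrc N r))"
    by (intro sum.cong) (simp_all add: algebra_simps)
  also have "\<dots> = aug_cost N A x f + (\<Sum>r\<in>R x. (rgain N r * f r) * p (rdst N r))
      - (\<Sum>r\<in>R x. f r * p (rsrc N r))"
    unfolding aug_cost_def by (simp only: sum.distrib sum_subtractf)
  also have "\<dots> = aug_cost N A x f - (\<Sum>v\<in>W. p v * excess x f v)"
    using sum_res_edges_by_vertex[OF rsrc_in_W, where g = f and p = p]
      sum_res_edges_by_vertex[OF rdst_in_W, where g = "\<lambda>r. rgain N r * f r" and p = p]
    unfolding excess_def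
    by (simp add: right_diff_distrib sum_subtractf)
  finally show ?thesis
    using excess_sum by simp
qed

lemma reduced_cost_terms_nonneg:
  assumes "feasible_potential N A x p" and "frac_aug N A W x s f" and "r \<in> R x"
  shows "0 \<le> f r * (rcost N r + rgain N r * p (rdst N r) - p (rsrc N r))"
proof -
  have "0 \<le> f r"
    using assms(2) unfolding frac_aug_def by blast
  moreover have "p (rsrc N r) \<le> rcost N r + rgain N r * p (rdst N r)"
    using assms(1,3) unfolding feasible_potential_def by blast
  ultimately show ?thesis
    by simp
qed

lemma potential_le_aug_cost:
  assumes p: "feasible_potential N A x p" and fa: "frac_aug N A W x s f" and s: "s \<in> W - {\<tau>}"
  shows "p s \<le> aug_cost N A x f"
proof -
  have "0 \<le> (\<Sum>r\<in>R x. f r * (rcost N r + rgain N r * p (rdst N r) - p (rsrc N r)))"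
    using reduced_cost_terms_nonneg[OF p fa] by (rule sum_nonneg)
  then show ?thesis
    using frac_aug_reduced_cost_sum[OF fa s] p unfolding feasible_potential_def by simp
qed

lemma tight_on_support:
  assumes p: "feasible_potential N A x p" and fa: "frac_aug N A W x s f" and s: "s \<in> W - {\<tau>}"
    and cost: "aug_cost N A x f \<le> p s" and r: "r \<in> R x" and fr: "f r > 0"
  shows "p (rsrc N r) = rcost N r + rgain N r * p (rdst N r)"
proof -
  have "(\<Sum>r\<in>R x. f r * (rcost N r + rgain N r * p (rdst N r) - p (rsrc N r))) = 0"
    using frac_aug_reduced_cost_sum[OF fa s] cost potential_le_aug_cost[OF p fa s] p
    unfolding feasible_potential_def by simp
  then have "f r * (rcost N r + rgain N r * p (rdst N r) - p (rsrc N r)) = 0"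
    using r by (subst (asm) sum_nonneg_eq_0_iff[OF finite_res_edges])
      (auto intro: reduced_cost_terms_nonneg[OF p fa])
  then show ?thesis
    using fr by simp
qed

end

fun rchain :: "('v, 'e) gnet \<Rightarrow> 'v \<Rightarrow> ('e \<times> bool) list \<Rightarrow> 'v \<Rightarrow> bool" where
  "rchain N a [] b \<longleftrightarrow> a = b"
| "rchain N a (r # P) b \<longleftrightarrow> rsrc N r = a \<and> rchain N (rdst N r) P b"

fun walk_cost :: "('v, 'e) gnet \<Rightarrow> ('e \<times> bool) list \<Rightarrow> real" where
  "walk_cost N [] = 0"
| "walk_cost N (r # P) = rcost N r + rgain N r * walk_cost N P"

fun walk_gain :: "('v, 'e) gnet \<Rightarrow> ('e \<times> bool) list \<Rightarrow> real" where
  "walk_gain N [] = 1"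
| "walk_gain N (r # P) = rgain N r * walk_gain N P"

fun walk_flow :: "('v, 'e) gnet \<Rightarrow> ('e \<times> bool) list \<Rightarrow> 'e \<times> bool \<Rightarrow> real" where
  "walk_flow N [] = (\<lambda>_. 0)"
| "walk_flow N (r # P) = (\<lambda>y. (if y = r then 1 else 0) + rgain N r * walk_flow N P y)"

text \<open>Cost per unit of flow entering a cycle of gain below 1 and circulating on it until it
  is used up: the geometric series over the rounds. For the empty cycle it is 0.\<close>

definition cycle_cost :: "('v, 'e) gnet \<Rightarrow> ('e \<times> bool) list \<Rightarrow> real" where
  "cycle_cost N C = walk_cost N C / (1 - walk_gain N C)"

definition lasso_cost :: "('v, 'e) gnet \<Rightarrow> ('e \<times> bool) list \<Rightarrow> ('e \<times> bool) list \<Rightarrow> real" where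
  "lasso_cost N P C = walk_cost N P + walk_gain N P * cycle_cost N C"

lemma rchain_append: "rchain N a (P @ Q) b \<longleftrightarrow> (\<exists>m. rchain N a P m \<and> rchain N m Q b)"
  by (induction P arbitrary: a) auto

lemma walk_cost_append: "walk_cost N (P @ Q) = walk_cost N P + walk_gain N P * walk_cost N Q"
  by (induction P) (auto simp: algebra_simps)

lemma walk_gain_append: "walk_gain N (P @ Q) = walk_gain N P * walk_gain N Q"
  by (induction P) auto

lemma rchain_last: "rchain N a P b \<Longrightarrow> last (a # map (rdst N) P) = b"
  by (induction P arbitrary: a) auto

lemma rchain_end_in_rdst: "rchain N a P b \<Longrightarrow> P \<noteq> [] \<Longrightarrow> b \<in> set (map (rdst N) P)"
  using rchain_last[of N a P b] by (metis last_ConsR last_in_set list.map_disc_iff)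

lemma rchain_hd: "C \<noteq> [] \<Longrightarrow> rchain N a C b \<Longrightarrow> rsrc N (hd C) = a"
  by (cases C) auto

lemma rchain_take:
  "rchain N a P b \<Longrightarrow> k \<le> length P \<Longrightarrow> rchain N a (take k P) ((a # map (rdst N) P) ! k)"
proof (induction P arbitrary: a k)
  case (Cons r P)
  then show ?case by (cases k) auto
qed auto

lemma rwalk_iff_rchain: "rwalk N P a b \<longleftrightarrow> P \<noteq> [] \<and> rchain N a P b"
proof (induction P arbitrary: a)
  case (Cons r P)
  show ?case
    using Cons.IH[of "rdst N r"]
    by (cases P) (auto simp: rwalk_def nth_Cons split: nat.splits)
qed (simp add: rwalk_def)

lemma pverts_rchain: "P \<noteq> [] \<Longrightarrow> rchain N a P b \<Longrightarrow> pverts N P = a # map (rdst N) P"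
  by (cases P) (auto simp: pverts_def)

lemma walk_flow_notin: "y \<notin> set P \<Longrightarrow> walk_flow N P y = 0"
  by (induction P) auto

context residual_network
begin

lemma walk_gain_pos: "set P \<subseteq> R x \<Longrightarrow> walk_gain N P > 0"
  by (induction P) (auto intro!: mult_pos_pos rgain_pos simp del: rgain.simps)

lemma walk_cost_nonneg: "set P \<subseteq> R x \<Longrightarrow> walk_cost N P \<ge> 0"
  by (induction P) (auto intro!: add_nonneg_nonneg mult_nonneg_nonneg rcost_nonneg less_imp_le[OF rgain_pos])

lemma cycle_cost_nonneg: "set C \<subseteq> R x \<Longrightarrow> walk_gain N C < 1 \<Longrightarrow> cycle_cost N C \<ge> 0"
  unfolding cycle_cost_def using walk_cost_nonneg by auto

lemma walk_flow_nonneg: "set P \<subseteq> R x \<Longrightarrow> walk_flow N P y \<ge> 0"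
  by (induction P) (auto intro!: add_nonneg_nonneg mult_nonneg_nonneg less_imp_le[OF rgain_pos])

lemma walk_flow_pos: "set P \<subseteq> R x \<Longrightarrow> y \<in> set P \<Longrightarrow> walk_flow N P y > 0"
proof (induction P)
  case (Cons r P)
  have "rgain N r > 0"
    using Cons.prems by (intro rgain_pos) auto
  moreover have "walk_flow N P y \<ge> 0"
    using Cons.prems by (intro walk_flow_nonneg) auto
  ultimately show ?case
    using Cons by (cases "y = r") (auto simp del: rgain.simps intro: add_pos_nonneg)
qed simp

lemma excess_lin: "excess x (\<lambda>y. f y + c * g y) v = excess x f v + c * excess x g v"
  unfolding excess_def by (simp add: sum.distrib sum_distrib_left algebra_simps)

lemma excess_single_edge:
  assumes "r \<in> R x"
  shows "excess x (\<lambda>y. if y = r then 1 else 0) v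
    = (if rsrc N r = v then 1 else 0) - rgain N r * (if rdst N r = v then 1 else 0)"
proof -
  have "(\<Sum>y\<in>{y\<in>R x. rdst N y = v}. rgain N y * (if y = r then 1 else 0))
       = (\<Sum>y\<in>{y\<in>R x. rdst N y = v}. (if y = r then rgain N y else 0))"
    by (rule sum.cong) auto
  then show ?thesis
    unfolding excess_def using finite_res_edges assms by auto
qed

lemma excess_walk_flow:
  "set P \<subseteq> R x \<Longrightarrow> rchain N a P b \<Longrightarrow>
   excess x (walk_flow N P) v = (if a = v then 1 else 0) - walk_gain N P * (if b = v then 1 else 0)"
proof (induction P arbitrary: a)
  case Nil
  then show ?case by (simp add: excess_def)
next
  case (Cons r P)
  have "excess x (walk_flow N (r # P)) v
      = excess x (\<lambda>y. if y = r then 1 else 0) v + rgain N r * excess x (walk_flow N P) v"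
    using excess_lin by simp
  also have "\<dots> = ((if rsrc N r = v then 1 else 0) - rgain N r * (if rdst N r = v then 1 else 0))
     + rgain N r * ((if rdst N r = v then 1 else 0) - walk_gain N P * (if b = v then 1 else 0))"
    using Cons.IH[of "rdst N r"] Cons.prems excess_single_edge[of r x v] by (simp del: rgain.simps)
  also have "\<dots> = (if a = v then 1 else 0) - walk_gain N (r # P) * (if b = v then 1 else 0)"
    using Cons.prems by (simp add: algebra_simps del: rgain.simps)
  finally show ?case .
qed

lemma aug_cost_lin: "aug_cost N A x (\<lambda>y. f y + c * g y) = aug_cost N A x f + c * aug_cost N A x g"
  unfolding aug_cost_def by (simp add: sum.distrib sum_distrib_left algebra_simps)

lemma aug_cost_walk_flow: "set P \<subseteq> R x \<Longrightarrow> aug_cost N A x (walk_flow N P) = walk_cost N P"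
proof (induction P)
  case Nil
  then show ?case by (simp add: aug_cost_def)
next
  case (Cons r P)
  have "aug_cost N A x (\<lambda>y. if y = r then 1 else 0) = rcost N r"
    unfolding aug_cost_def using Cons.prems finite_res_edges[of x]
    by (simp add: if_distrib cong: if_cong)
  then show ?case
    using Cons aug_cost_lin[of x "\<lambda>y. if y = r then 1 else 0" "rgain N r" "walk_flow N P"] by simp
qed

section \<open>Lassos\<close>

text \<open>The three shapes of an augmenting path, given by lists of residual edges: a path
  \<open>P\<close> to the sink (\<open>C = []\<close>), or a stem \<open>P\<close> followed by a cycle \<open>C\<close> of gain below 1,
  where \<open>P = []\<close> if the cycle passes through \<open>v\<close>.\<close>

definition lasso :: "('e \<Rightarrow> real) \<Rightarrow> 'v \<Rightarrow> ('e \<times> bool) list \<Rightarrow> ('e \<times> bool) list \<Rightarrow> bool" where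
  "lasso x v P C \<longleftrightarrow> set P \<union> set C \<subseteq> R x \<and> distinct (v # map (rdst N) P) \<and>
     (C = [] \<longrightarrow> P \<noteq> [] \<and> rchain N v P \<tau>) \<and>
     (C \<noteq> [] \<longrightarrow> (\<exists>w. rchain N v P w \<and> rchain N w C w \<and> distinct (map (rdst N) C) \<and>
        set (v # map (rdst N) P) \<inter> set (map (rdst N) C) = {w} \<and>
        \<tau> \<notin> set (v # map (rdst N) P) \<and> \<tau> \<notin> set (map (rdst N) C) \<and> walk_gain N C < 1))"

lemma path_aug_path:
  assumes sub: "set P \<subseteq> R x" and dist: "distinct (v # map (rdst N) P)"
    and ne: "P \<noteq> []" and ch: "rchain N v P \<tau>"
  shows "aug_path N A W x v (walk_flow N P)"
proof -
  have "frac_aug N A W x v (walk_flow N P)"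
    unfolding frac_aug_iff_excess
  proof (intro conjI allI impI ballI)
    fix r
    show "0 \<le> walk_flow N P r"
      by (rule walk_flow_nonneg[OF sub])
    show "r \<notin> R x \<Longrightarrow> walk_flow N P r = 0"
      using sub by (intro walk_flow_notin) auto
  next
    fix u
    assume "u \<in> W - {\<tau>}"
    then show "excess x (walk_flow N P) u = (if u = v then 1 else 0)"
      using excess_walk_flow[OF sub ch] by auto
  qed
  moreover have "simple_path N P v \<tau>"
    unfolding simple_path_def using rwalk_iff_rchain[of N P v \<tau>] ne ch dist pverts_rchain[OF ne ch] by simp
  moreover have "supp N A x (walk_flow N P) = set P"
    unfolding supp_def using sub walk_flow_pos[OF sub] walk_flow_notin[of _ P N]
    by (force simp del: walk_flow.simps)
  ultimately show ?thesis
    unfolding aug_path_def by blast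
qed

text \<open>Of the unit sent along \<open>P\<close>, the amount \<open>walk_gain N P\<close> reaches the cycle; each round
  on \<open>C\<close> keeps the fraction \<open>walk_gain N C\<close> of it, so the total flow entering \<open>C\<close> is the sum
  of a geometric series.\<close>

lemma stem_cycle_flow:
  assumes sub: "set P \<subseteq> R x" "set C \<subseteq> R x"
    and ch: "rchain N v P w" and chC: "rchain N w C w" and gain_C: "walk_gain N C < 1"
  defines "g \<equiv> (\<lambda>y. walk_flow N P y + walk_gain N P / (1 - walk_gain N C) * walk_flow N C y)"
  shows "frac_aug N A W x v g" and "supp N A x g = set P \<union> set C"
proof -
  define k where "k = walk_gain N P / (1 - walk_gain N C)"
  have k: "k > 0"
    unfolding k_def using gain_C walk_gain_pos[OF sub(1)] by simp
  have g: "g = (\<lambda>y. walk_flow N P y + k * walk_flow N C y)"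
    unfolding g_def k_def ..
  have g_excess: "excess x g u = (if u = v then 1 else 0)" for u
  proof -
    have "excess x g u = excess x (walk_flow N P) u + k * excess x (walk_flow N C) u"
      unfolding g by (rule excess_lin)
    also have "\<dots> = (if v = u then 1 else 0) - walk_gain N P * (if w = u then 1 else 0)
        + k * ((if w = u then 1 else 0) - walk_gain N C * (if w = u then 1 else 0))"
      using excess_walk_flow[OF sub(1) ch] excess_walk_flow[OF sub(2) chC] by simp
    also have "\<dots> = (if u = v then 1 else 0)"
      unfolding k_def using gain_C by (auto simp add: field_simps)
    finally show ?thesis .
  qed
  have g_nonneg: "g y \<ge> 0" for y
    unfolding g using walk_flow_nonneg[OF sub(1), of y] walk_flow_nonneg[OF sub(2), of y] k by simp
  have g_pos: "g y > 0 \<longleftrightarrow> y \<in> set P \<union> set C" for y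
    unfolding g using walk_flow_nonneg[OF sub(1), of y] walk_flow_nonneg[OF sub(2), of y]
      walk_flow_pos[OF sub(1), of y] walk_flow_pos[OF sub(2), of y]
      walk_flow_notin[of y P N] walk_flow_notin[of y C N] k
    by (cases "y \<in> set P"; cases "y \<in> set C") (auto intro: add_pos_nonneg add_nonneg_pos)
  have "g y = 0" if "y \<notin> R x" for y
    using g_nonneg[of y] g_pos[of y] sub that by force
  then show "frac_aug N A W x v g"
    unfolding frac_aug_iff_excess using g_excess g_nonneg by blast
  show "supp N A x g = set P \<union> set C"
    unfolding supp_def using g_pos sub by auto
qed

lemma lasso_cycle_aug_path:
  assumes sub: "set P \<subseteq> R x" "set C \<subseteq> R x" and dist: "distinct (v # map (rdst N) P)"
    and C: "C \<noteq> []" and ch: "rchain N v P w" and chC: "rchain N w C w"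
    and distC: "distinct (map (rdst N) C)"
    and meet: "set (v # map (rdst N) P) \<inter> set (map (rdst N) C) = {w}"
    and sink_notin: "\<tau> \<notin> set (map (rdst N) C)" and gain_C: "walk_gain N C < 1"
  defines "g \<equiv> (\<lambda>y. walk_flow N P y + walk_gain N P / (1 - walk_gain N C) * walk_flow N C y)"
  shows "aug_path N A W x v g"
proof -
  have fa: "frac_aug N A W x v g" and supp: "supp N A x g = set P \<union> set C"
    unfolding g_def using stem_cycle_flow[OF sub ch chC gain_C] by auto
  have cycle: "simple_cycle N C"
    unfolding simple_cycle_def using C chC distC rwalk_iff_rchain[of N C w w] rchain_hd[OF C chC]
    by simp
  have w_on_C: "w \<in> set (map (rdst N) C)"
    using meet by auto
  show ?thesis
  proof (cases "P = []")
    case True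
    then have "v = w" using ch by simp
    then show ?thesis
      unfolding aug_path_def using fa cycle w_on_C sink_notin supp True by auto
  next
    case False
    have "last (v # map (rdst N) P) = w"
      using rchain_last[OF ch] .
    then have "w \<in> set (map (rdst N) P)"
      using False by (cases P rule: rev_cases) auto
    then have "v \<notin> set (map (rdst N) C)"
      using dist meet by auto
    moreover have "simple_path N P v w"
      unfolding simple_path_def using rwalk_iff_rchain[of N P v w] False ch dist pverts_rchain[OF False ch] by simp
    moreover have "set (pverts N P) \<inter> set (map (rdst N) C) = {w}"
      using meet pverts_rchain[OF False ch] by simp
    ultimately show ?thesis
      unfolding aug_path_def using fa cycle sink_notin supp by blast
  qed
qed

lemma lasso_aug_path:
  assumes "lasso x v P C"
  obtains g where "aug_path N A W x v g" and "aug_cost N A x g = lasso_cost N P C"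
proof (cases "C = []")
  case True
  then have path: "set P \<subseteq> R x" "distinct (v # map (rdst N) P)" "P \<noteq> []" "rchain N v P \<tau>"
    using assms unfolding lasso_def by auto
  show ?thesis
  proof (rule that)
    show "aug_path N A W x v (walk_flow N P)"
      using path by (rule path_aug_path)
    show "aug_cost N A x (walk_flow N P) = lasso_cost N P C"
      unfolding lasso_cost_def cycle_cost_def using aug_cost_walk_flow path(1) True by simp
  qed
next
  case False
  then obtain w where lasso: "set P \<subseteq> R x" "set C \<subseteq> R x" "distinct (v # map (rdst N) P)"
    "rchain N v P w" "rchain N w C w" "distinct (map (rdst N) C)"
    "set (v # map (rdst N) P) \<inter> set (map (rdst N) C) = {w}"
    "\<tau> \<notin> set (map (rdst N) C)" "walk_gain N C < 1"
    using assms unfolding lasso_def by auto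
  show ?thesis
  proof (rule that)
    show "aug_path N A W x v
      (\<lambda>y. walk_flow N P y + walk_gain N P / (1 - walk_gain N C) * walk_flow N C y)"
      using lasso(1-3) False lasso(4-) by (rule lasso_cycle_aug_path)
    show "aug_cost N A x
      (\<lambda>y. walk_flow N P y + walk_gain N P / (1 - walk_gain N C) * walk_flow N C y) = lasso_cost N P C"
      unfolding lasso_cost_def cycle_cost_def aug_cost_lin using aug_cost_walk_flow lasso(1,2) by simp
  qed
qed

lemma lasso_cost_nonneg:
  assumes "lasso x v P C"
  shows "lasso_cost N P C \<ge> 0"
proof (cases "C = []")
  case True
  then show ?thesis
    using assms unfolding lasso_def lasso_cost_def cycle_cost_def by (auto intro: walk_cost_nonneg)
next
  case False
  then have "set P \<subseteq> R x" "set C \<subseteq> R x" "walk_gain N C < 1"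
    using assms unfolding lasso_def by auto
  then have "walk_cost N P \<ge> 0" "walk_gain N P > 0" "cycle_cost N C \<ge> 0"
    using walk_cost_nonneg walk_gain_pos cycle_cost_nonneg by auto
  then show ?thesis
    unfolding lasso_cost_def by simp
qed

lemma lassoE:
  assumes "lasso x v P C"
  obtains b where "set P \<subseteq> R x" and "set C \<subseteq> R x" and "distinct (v # map (rdst N) P)"
    and "rchain N v P b" and "C = [] \<Longrightarrow> b = \<tau> \<and> P \<noteq> []"
    and "C \<noteq> [] \<Longrightarrow> rchain N b C b \<and> distinct (map (rdst N) C) \<and>
       set (v # map (rdst N) P) \<inter> set (map (rdst N) C) = {b} \<and>
       \<tau> \<notin> set (v # map (rdst N) P) \<and> \<tau> \<notin> set (map (rdst N) C) \<and> walk_gain N C < 1"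
  using assms unfolding lasso_def by (cases "C = []") auto

lemma lasso_cycleI:
  assumes "set C \<subseteq> R x" and "C \<noteq> []" and "rchain N u C u" and "distinct (map (rdst N) C)"
    and "\<tau> \<notin> set (map (rdst N) C)" and "walk_gain N C < 1"
  shows "lasso x u [] C"
proof -
  have "u \<in> set (map (rdst N) C)"
    using assms(3,2) by (rule rchain_end_in_rdst)
  then show ?thesis
    unfolding lasso_def using assms by auto
qed

end

section \<open>Prepending an edge to a lasso\<close>

text \<open>Let a walk start with an edge of cost \<open>c\<close> and gain \<open>g\<close>, return to its start after a
  part of cost \<open>c\<^sub>P\<close> and gain \<open>g\<^sub>P\<close>, and then continue at cost \<open>c\<^sub>S\<close>.
  Either dropping the closed part or turning it into a lossy cycle is no more expensive.\<close>

lemma drop_closed_walk_or_cycle_le: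
  fixes c g cP gP cS :: real
  assumes "c \<ge> 0" "g > 0" "cP \<ge> 0" "gP > 0" "cS \<ge> 0"
  shows "cS \<le> c + g * (cP + gP * cS) \<or>
         (g * gP < 1 \<and> (c + g * cP) / (1 - g * gP) \<le> c + g * (cP + gP * cS))"
proof (cases "g * gP < 1")
  case False
  then have "cS \<le> (g * gP) * cS"
    using assms by (simp add: mult_le_cancel_right1)
  also have "\<dots> \<le> c + g * (cP + gP * cS)"
    using assms by (simp add: algebra_simps)
  finally show ?thesis by simp
next
  case True
  define K where "K = (c + g * cP) / (1 - g * gP)"
  have K: "K * (1 - g * gP) = c + g * cP"
    unfolding K_def using True by simp
  show ?thesis
  proof (cases "cS \<le> K")
    case True
    then have "cS * (1 - g * gP) \<le> K * (1 - g * gP)"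
      using \<open>g * gP < 1\<close> by (simp add: mult_right_mono)
    then show ?thesis
      using K by (simp add: algebra_simps)
  next
    case False
    have "K = c + g * cP + g * gP * K"
      using K by (simp add: algebra_simps)
    also have "\<dots> \<le> c + g * cP + g * gP * cS"
      using False assms by (simp add: mult_left_mono less_imp_le)
    finally show ?thesis
      using True unfolding K_def by (simp add: algebra_simps)
  qed
qed

lemma cycle_cost_rotate:
  assumes "walk_gain N (C1 @ C2) < 1"
  shows "cycle_cost N (C1 @ C2) = walk_cost N C1 + walk_gain N C1 * cycle_cost N (C2 @ C1)"
proof -
  have "1 - walk_gain N C1 * walk_gain N C2 \<noteq> 0"
    using assms walk_gain_append[of N C1 C2] by simp
  then show ?thesis
    unfolding cycle_cost_def walk_cost_append walk_gain_append mult.commute[of "walk_gain N C2"]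
    by (simp add: field_simps)
qed

context residual_network
begin

lemma lasso_prepend_fresh:
  assumes r: "r \<in> R x" and u: "rsrc N r = u" and v: "rdst N r = v" and ut: "u \<noteq> \<tau>"
    and lasso: "lasso x v P C"
    and fresh: "u \<notin> set (v # map (rdst N) P)" "u \<notin> set (map (rdst N) C)"
  shows "lasso x u (r # P) C"
    and "lasso_cost N (r # P) C = rcost N r + rgain N r * lasso_cost N P C"
proof -
  obtain b where "set P \<subseteq> R x" "set C \<subseteq> R x" "distinct (v # map (rdst N) P)"
    "rchain N v P b" "C = [] \<Longrightarrow> b = \<tau> \<and> P \<noteq> []"
    "C \<noteq> [] \<Longrightarrow> rchain N b C b \<and> distinct (map (rdst N) C) \<and>
       set (v # map (rdst N) P) \<inter> set (map (rdst N) C) = {b} \<and>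
       \<tau> \<notin> set (v # map (rdst N) P) \<and> \<tau> \<notin> set (map (rdst N) C) \<and> walk_gain N C < 1"
    using lasso by (elim lassoE) blast
  then show "lasso x u (r # P) C"
    unfolding lasso_def using r u v ut fresh by auto
  show "lasso_cost N (r # P) C = rcost N r + rgain N r * lasso_cost N P C"
    unfolding lasso_cost_def by (simp add: algebra_simps del: rgain.simps rcost.simps)
qed

lemma lasso_stem_suffix:
  assumes lasso: "lasso x v (P1 @ P2) C" and ch1: "rchain N v P1 u" and u: "u \<noteq> \<tau>"
  shows "lasso x u P2 C"
proof -
  obtain b where sub: "set P2 \<subseteq> R x" "set C \<subseteq> R x"
    and dist: "distinct ((v # map (rdst N) P1) @ map (rdst N) P2)"
    and ch: "rchain N v (P1 @ P2) b" and path: "C = [] \<Longrightarrow> b = \<tau> \<and> P1 @ P2 \<noteq> []"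
    and cycle: "C \<noteq> [] \<Longrightarrow> rchain N b C b \<and> distinct (map (rdst N) C) \<and>
       set ((v # map (rdst N) P1) @ map (rdst N) P2) \<inter> set (map (rdst N) C) = {b} \<and>
       \<tau> \<notin> set ((v # map (rdst N) P1) @ map (rdst N) P2) \<and> \<tau> \<notin> set (map (rdst N) C) \<and>
       walk_gain N C < 1"
    using lasso by (elim lassoE) auto
  have ch2: "rchain N u P2 b"
    using ch ch1 unfolding rchain_append by (metis rchain_last)
  have last: "last (v # map (rdst N) P1) = u"
    using rchain_last[OF ch1] .
  then have stem: "set (u # map (rdst N) P2) \<subseteq> set ((v # map (rdst N) P1) @ map (rdst N) P2)"
    by (metis Un_iff insert_subset last_in_set list.distinct(1) list.simps(15) set_append subsetI)
  have "u \<in> set (v # map (rdst N) P1)"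
    using last by (metis last_in_set list.distinct(1))
  then have "distinct (u # map (rdst N) P2)"
    using dist by auto
  moreover have "P2 \<noteq> [] \<and> rchain N u P2 \<tau>" if "C = []"
    using ch2 path[OF that] u by (cases P2) auto
  moreover have "b \<in> set (u # map (rdst N) P2)"
    using rchain_last[OF ch2] by (metis last_in_set list.distinct(1))
  ultimately show ?thesis
    unfolding lasso_def using sub ch2 cycle stem by blast
qed

lemma lasso_stem_loop:
  assumes r: "r \<in> R x" "rsrc N r = u" "rdst N r = v" and u: "u \<noteq> \<tau>"
    and lasso: "lasso x v (P1 @ P2) C" and ch1: "rchain N v P1 u"
    and gain: "walk_gain N (r # P1) < 1"
  shows "lasso x u [] (r # P1)"
proof (rule lasso_cycleI)
  obtain b where sub: "set P1 \<subseteq> R x"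
    and dist: "distinct ((v # map (rdst N) P1) @ map (rdst N) P2)"
    and ch: "rchain N v (P1 @ P2) b" and path: "C = [] \<Longrightarrow> b = \<tau>"
    and cycle: "C \<noteq> [] \<Longrightarrow> \<tau> \<notin> set ((v # map (rdst N) P1) @ map (rdst N) P2)"
    using lasso by (elim lassoE) auto
  have verts: "map (rdst N) (r # P1) = v # map (rdst N) P1"
    using r by simp
  show "set (r # P1) \<subseteq> R x" "r # P1 \<noteq> []" "walk_gain N (r # P1) < 1"
    using r sub gain by auto
  show "rchain N u (r # P1) u"
    using r ch1 by simp
  show "distinct (map (rdst N) (r # P1))"
    unfolding verts using dist by simp
  have "\<tau> \<notin> set (v # map (rdst N) P1)" if "C = []"
  proof -
    have "rchain N u P2 \<tau>"
      using ch ch1 path[OF that] unfolding rchain_append by (metis rchain_last)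
    moreover have "P2 \<noteq> []"
      using calculation u by (cases P2) auto
    ultimately have "\<tau> \<in> set (map (rdst N) P2)"
      by (rule rchain_end_in_rdst)
    then show ?thesis
      using dist by auto
  qed
  then show "\<tau> \<notin> set (map (rdst N) (r # P1))"
    unfolding verts using cycle by auto
qed

lemma lasso_cycle_rotate:
  assumes lasso: "lasso x v P (C1 @ C2)" and C1: "C1 \<noteq> []" and u: "rdst N (last C1) = u"
  shows "lasso x u [] (C2 @ C1)"
proof (rule lasso_cycleI)
  obtain b where sub: "set C1 \<subseteq> R x" "set C2 \<subseteq> R x"
    and cycle: "rchain N b (C1 @ C2) b" "distinct (map (rdst N) (C1 @ C2))"
      "\<tau> \<notin> set (map (rdst N) (C1 @ C2))" "walk_gain N (C1 @ C2) < 1"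
    using lasso C1 by (elim lassoE) auto
  obtain m where "rchain N b C1 m" "rchain N m C2 b"
    using cycle(1) unfolding rchain_append by blast
  moreover have "m = u"
    using rchain_last[OF \<open>rchain N b C1 m\<close>] C1 u by (simp add: last_map)
  ultimately show "rchain N u (C2 @ C1) u"
    unfolding rchain_append by blast
  show "set (C2 @ C1) \<subseteq> R x" "C2 @ C1 \<noteq> []"
    using sub C1 by auto
  show "distinct (map (rdst N) (C2 @ C1))" "\<tau> \<notin> set (map (rdst N) (C2 @ C1))"
    using cycle(2,3) by auto
  show "walk_gain N (C2 @ C1) < 1"
    using cycle(4) unfolding walk_gain_append by (simp add: mult.commute)
qed

lemma lasso_cycle_loop:
  assumes r: "r \<in> R x" "rsrc N r = u" "rdst N r = v"
    and lasso: "lasso x v P (C1 @ C2)" and C: "C1 \<noteq> []" "C2 \<noteq> []" and u: "rdst N (last C1) = u"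
    and gain: "walk_gain N (r # P @ C1) < 1"
  shows "lasso x u [] (r # P @ C1)"
proof (rule lasso_cycleI)
  obtain b where sub: "set P \<subseteq> R x" "set C1 \<subseteq> R x" and dist: "distinct (v # map (rdst N) P)"
    and ch: "rchain N v P b"
    and cycle: "rchain N b (C1 @ C2) b" "distinct (map (rdst N) (C1 @ C2))"
      "set (v # map (rdst N) P) \<inter> set (map (rdst N) (C1 @ C2)) = {b}"
      "\<tau> \<notin> set (v # map (rdst N) P)" "\<tau> \<notin> set (map (rdst N) (C1 @ C2))"
    using lasso C by (elim lassoE) auto
  obtain m where ch1: "rchain N b C1 m" and ch2: "rchain N m C2 b"
    using cycle(1) unfolding rchain_append by blast
  have "m = u"
    using rchain_last[OF ch1] C u by (simp add: last_map)
  then show "rchain N u (r # P @ C1) u"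
    unfolding rchain.simps rchain_append using r ch ch1 by blast
  have verts: "map (rdst N) (r # P @ C1) = (v # map (rdst N) P) @ map (rdst N) C1"
    using r by simp
  have "b \<in> set (map (rdst N) C2)"
    using ch2 C(2) by (rule rchain_end_in_rdst)
  then have "b \<notin> set (map (rdst N) C1)"
    using cycle(2) by auto
  then have "set (v # map (rdst N) P) \<inter> set (map (rdst N) C1) = {}"
    using cycle(3) by auto
  then show "distinct (map (rdst N) (r # P @ C1))"
    unfolding verts using dist cycle(2) by simp
  show "\<tau> \<notin> set (map (rdst N) (r # P @ C1))"
    unfolding verts using cycle(4,5) by simp
  show "set (r # P @ C1) \<subseteq> R x" "r # P @ C1 \<noteq> []" "walk_gain N (r # P @ C1) < 1"
    using r sub gain by auto
qed

lemma lasso_prepend_closed_walk: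
  assumes r: "r \<in> R x" and Pre: "set Pre \<subseteq> R x" and suffix: "lasso x u P' C'"
    and cost: "lasso_cost N P C = walk_cost N Pre + walk_gain N Pre * lasso_cost N P' C'"
    and loop: "walk_gain N (r # Pre) < 1 \<Longrightarrow> lasso x u [] (r # Pre)"
  shows "\<exists>P'' C''. lasso x u P'' C'' \<and> lasso_cost N P'' C'' \<le> rcost N r + rgain N r * lasso_cost N P C"
  using drop_closed_walk_or_cycle_le[OF rcost_nonneg[OF r] rgain_pos[OF r]
      walk_cost_nonneg[OF Pre] walk_gain_pos[OF Pre] lasso_cost_nonneg[OF suffix]]
proof
  assume "lasso_cost N P' C' \<le> rcost N r + rgain N r * (walk_cost N Pre + walk_gain N Pre * lasso_cost N P' C')"
  then show ?thesis
    using suffix cost by auto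
next
  assume closed: "rgain N r * walk_gain N Pre < 1 \<and>
    (rcost N r + rgain N r * walk_cost N Pre) / (1 - rgain N r * walk_gain N Pre)
      \<le> rcost N r + rgain N r * (walk_cost N Pre + walk_gain N Pre * lasso_cost N P' C')"
  moreover have "lasso_cost N [] (r # Pre)
      = (rcost N r + rgain N r * walk_cost N Pre) / (1 - rgain N r * walk_gain N Pre)"
    unfolding lasso_cost_def cycle_cost_def by (simp del: rgain.simps rcost.simps)
  ultimately show ?thesis
    using loop cost by (metis walk_gain.simps(2))
qed

lemma lasso_prepend_on_stem:
  assumes r: "r \<in> R x" "rsrc N r = u" "rdst N r = v" and u: "u \<noteq> \<tau>"
    and lasso: "lasso x v P C" and u_on_stem: "u \<in> set (v # map (rdst N) P)"
  shows "\<exists>P' C'. lasso x u P' C' \<and> lasso_cost N P' C' \<le> rcost N r + rgain N r * lasso_cost N P C"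
proof -
  obtain b where sub: "set P \<subseteq> R x" and ch: "rchain N v P b"
    using lasso by (elim lassoE) auto
  obtain k where k: "k < length (v # map (rdst N) P)" "(v # map (rdst N) P) ! k = u"
    using u_on_stem unfolding in_set_conv_nth by blast
  define P1 where "P1 = take k P"
  define P2 where "P2 = drop k P"
  have split: "P = P1 @ P2"
    unfolding P1_def P2_def by simp
  have ch1: "rchain N v P1 u"
    using rchain_take[OF ch, of k] k unfolding P1_def by simp
  have "set P1 \<subseteq> R x"
    using sub unfolding split by simp
  moreover have "lasso x u P2 C"
    using lasso ch1 u unfolding split by (rule lasso_stem_suffix)
  moreover have "lasso_cost N P C = walk_cost N P1 + walk_gain N P1 * lasso_cost N P2 C"
    unfolding split lasso_cost_def by (simp add: walk_cost_append walk_gain_append algebra_simps)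
  moreover have "walk_gain N (r # P1) < 1 \<Longrightarrow> lasso x u [] (r # P1)"
    using r u lasso ch1 unfolding split by (rule lasso_stem_loop)
  ultimately show ?thesis
    by (rule lasso_prepend_closed_walk[OF r(1)])
qed

lemma lasso_prepend_on_cycle:
  assumes r: "r \<in> R x" "rsrc N r = u" "rdst N r = v"
    and lasso: "lasso x v P C" and u_off_stem: "u \<notin> set (v # map (rdst N) P)"
    and u_on_cycle: "u \<in> set (map (rdst N) C)"
  shows "\<exists>P' C'. lasso x u P' C' \<and> lasso_cost N P' C' \<le> rcost N r + rgain N r * lasso_cost N P C"
proof -
  have C: "C \<noteq> []"
    using u_on_cycle by auto
  obtain b where sub: "set P \<subseteq> R x" "set C \<subseteq> R x" and ch: "rchain N v P b"
    and chC: "rchain N b C b" and gain_C: "walk_gain N C < 1"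
    using lasso C by (elim lassoE) auto
  obtain k where k: "k < length C" "rdst N (C ! k) = u"
    using u_on_cycle by (auto simp: in_set_conv_nth)
  define C1 where "C1 = take (Suc k) C"
  define C2 where "C2 = drop (Suc k) C"
  have split: "C = C1 @ C2"
    unfolding C1_def C2_def by simp
  have C1: "C1 \<noteq> []" "rdst N (last C1) = u"
    using k unfolding C1_def by (simp_all add: take_Suc_conv_app_nth)
  have "u \<noteq> b"
    using u_off_stem rchain_last[OF ch] by (metis last_in_set list.distinct(1))
  then have C2: "C2 \<noteq> []"
    using rchain_last[OF chC] C1 unfolding split by (auto simp: last_map)
  have "cycle_cost N C = walk_cost N C1 + walk_gain N C1 * cycle_cost N (C2 @ C1)"
    using cycle_cost_rotate[of N C1 C2] gain_C unfolding split by simp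
  then have cost: "lasso_cost N P C
      = walk_cost N (P @ C1) + walk_gain N (P @ C1) * lasso_cost N [] (C2 @ C1)"
    unfolding lasso_cost_def walk_cost_append walk_gain_append by (simp add: algebra_simps)
  have Pre: "set (P @ C1) \<subseteq> R x"
    using sub unfolding split by simp
  have rotated: "lasso x u [] (C2 @ C1)"
    using lasso C1 unfolding split by (rule lasso_cycle_rotate)
  have loop: "walk_gain N (r # P @ C1) < 1 \<Longrightarrow> lasso x u [] (r # P @ C1)"
    using r lasso C1(1) C2 C1(2) unfolding split by (rule lasso_cycle_loop)
  show ?thesis
    using lasso_prepend_closed_walk[OF r(1) Pre rotated cost loop] .
qed

lemma lasso_prepend:
  assumes r: "r \<in> R x" and "rsrc N r \<noteq> \<tau>" and "rdst N r \<noteq> \<tau>" and "lasso x (rdst N r) P C"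
  obtains P' C' where "lasso x (rsrc N r) P' C'"
    and "lasso_cost N P' C' \<le> rcost N r + rgain N r * lasso_cost N P C"
proof -
  consider (stem) "rsrc N r \<in> set (rdst N r # map (rdst N) P)"
    | (cycle) "rsrc N r \<notin> set (rdst N r # map (rdst N) P)" "rsrc N r \<in> set (map (rdst N) C)"
    | (fresh) "rsrc N r \<notin> set (rdst N r # map (rdst N) P)" "rsrc N r \<notin> set (map (rdst N) C)"
    by blast
  then show ?thesis
  proof cases
    case stem
    then show ?thesis
      using lasso_prepend_on_stem[OF r refl refl assms(2,4)] that by blast
  next
    case cycle
    then show ?thesis
      using lasso_prepend_on_cycle[OF r refl refl assms(4)] that by blast
  next
    case fresh
    then show ?thesis
      using lasso_prepend_fresh[OF r refl refl assms(2,4)] that by fastforce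
  qed
qed

lemma dummy_res_edge:
  assumes "v \<in> W" and "v \<noteq> \<tau>"
  obtains r where "r \<in> R x" and "rsrc N r = v" and "rdst N r = \<tau>"
proof -
  obtain e where e: "e \<in> A" "src N e = v" "dst N e = \<tau>" "cap N e = \<infinity>"
    using dummy_edge[OF assms] by blast
  then have "(e, True) \<in> R x"
    unfolding res_edges_def by auto
  with e that show ?thesis
    by simp
qed

lemma lasso_edge_to_sink:
  "r \<in> R x \<Longrightarrow> rdst N r = \<tau> \<Longrightarrow> rsrc N r \<noteq> \<tau> \<Longrightarrow> lasso x (rsrc N r) [r] []"
  unfolding lasso_def by auto

definition lasso_height :: "('e \<Rightarrow> real) \<Rightarrow> 'v \<Rightarrow> real" where
  "lasso_height x v = Inf {lasso_cost N P C | P C. lasso x v P C}"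

lemma lasso_height_le: "lasso x v P C \<Longrightarrow> lasso_height x v \<le> lasso_cost N P C"
  unfolding lasso_height_def
  by (rule cInf_lower) (auto simp: bdd_below_def intro: lasso_cost_nonneg)

lemma lasso_height_greatest:
  assumes "v \<in> W" and "v \<noteq> \<tau>" and "\<And>P C. lasso x v P C \<Longrightarrow> z \<le> lasso_cost N P C"
  shows "z \<le> lasso_height x v"
proof -
  obtain r where "r \<in> R x" "rsrc N r = v" "rdst N r = \<tau>"
    using dummy_res_edge[OF assms(1,2)] .
  then have "lasso x v [r] []"
    using lasso_edge_to_sink assms(2) by blast
  then show ?thesis
    unfolding lasso_height_def using assms(3) by (intro cInf_greatest) auto
qed

lemma lasso_height_nonneg: "v \<in> W \<Longrightarrow> v \<noteq> \<tau> \<Longrightarrow> 0 \<le> lasso_height x v"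
  using lasso_height_greatest lasso_cost_nonneg by blast

lemma potential_le_lasso_height:
  assumes "feasible_potential N A x p" and "v \<in> W" and "v \<noteq> \<tau>"
  shows "p v \<le> lasso_height x v"
proof (rule lasso_height_greatest[OF assms(2,3)])
  fix P C
  assume "lasso x v P C"
  then obtain g where "aug_path N A W x v g" and "aug_cost N A x g = lasso_cost N P C"
    by (rule lasso_aug_path)
  then show "p v \<le> lasso_cost N P C"
    using potential_le_aug_cost[OF assms(1)] assms(2,3) unfolding aug_path_def by fastforce
qed

lemma potential_le_height:
  assumes p: "feasible_potential N A x p" and v: "v \<in> W" "v \<noteq> \<tau>"
  shows "p v \<le> height N A W x v"
  unfolding height_def
proof (rule cInf_greatest)
  obtain r where "r \<in> R x" "rsrc N r = v" "rdst N r = \<tau>"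
    using dummy_res_edge[OF v] .
  then obtain g where "aug_path N A W x v g"
    using lasso_aug_path lasso_edge_to_sink v(2) by metis
  then show "{aug_cost N A x f |f. aug_path N A W x v f} \<noteq> {}"
    by blast
next
  fix c
  assume "c \<in> {aug_cost N A x f |f. aug_path N A W x v f}"
  then show "p v \<le> c"
    using potential_le_aug_cost[OF p] v unfolding aug_path_def by blast
qed

lemma lasso_height_bellman:
  assumes r: "r \<in> R x" and "rsrc N r \<noteq> \<tau>" and "rdst N r \<noteq> \<tau>"
  shows "lasso_height x (rsrc N r) \<le> rcost N r + rgain N r * lasso_height x (rdst N r)"
proof -
  have g: "rgain N r > 0"
    using rgain_pos[OF r] .
  have "(lasso_height x (rsrc N r) - rcost N r) / rgain N r \<le> lasso_height x (rdst N r)"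
  proof (rule lasso_height_greatest[OF rdst_in_W[OF r] assms(3)])
    fix P C
    assume "lasso x (rdst N r) P C"
    then obtain P' C' where "lasso x (rsrc N r) P' C'"
      and "lasso_cost N P' C' \<le> rcost N r + rgain N r * lasso_cost N P C"
      using lasso_prepend[OF assms] by blast
    then have "lasso_height x (rsrc N r) \<le> rcost N r + rgain N r * lasso_cost N P C"
      using lasso_height_le by fastforce
    then show "(lasso_height x (rsrc N r) - rcost N r) / rgain N r \<le> lasso_cost N P C"
      using g by (simp add: divide_le_eq algebra_simps)
  qed
  then show ?thesis
    using g by (simp add: divide_le_eq algebra_simps)
qed

text \<open>Off \<open>W\<close> the old potential is kept, which makes the update monotone.\<close>

definition height_potential :: "('e \<Rightarrow> real) \<Rightarrow> ('v \<Rightarrow> real) \<Rightarrow> 'v \<Rightarrow> real" where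
  "height_potential x p v = (if v = \<tau> then 0 else if v \<in> W then lasso_height x v else p v)"

lemma feasible_height_potential:
  assumes p: "feasible_potential N A x p"
  shows "feasible_potential N A x (height_potential x p)"
  unfolding feasible_potential_def
proof (intro conjI allI ballI)
  show nonneg: "0 \<le> height_potential x p v" for v
    unfolding height_potential_def using lasso_height_nonneg p
    unfolding feasible_potential_def by auto
  show "height_potential x p \<tau> = 0"
    unfolding height_potential_def by simp
  fix r
  assume r: "r \<in> R x"
  show "height_potential x p (rsrc N r) \<le> rcost N r + rgain N r * height_potential x p (rdst N r)"
  proof (cases "rsrc N r = \<tau>")
    case True
    then have "height_potential x p (rsrc N r) = 0"
      unfolding height_potential_def by simp
    then show ?thesis
      using nonneg[of "rdst N r"] rcost_nonneg[OF r] rgain_pos[OF r] by simp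
  next
    case src: False
    show ?thesis
    proof (cases "rdst N r = \<tau>")
      case True
      have "lasso_height x (rsrc N r) \<le> lasso_cost N [r] []"
        using lasso_edge_to_sink[OF r True src] by (rule lasso_height_le)
      then show ?thesis
        unfolding height_potential_def using True src rsrc_in_W[OF r]
        by (simp add: lasso_cost_def cycle_cost_def del: rgain.simps rcost.simps)
    next
      case False
      then show ?thesis
        unfolding height_potential_def
        using lasso_height_bellman[OF r src False] src rsrc_in_W[OF r] rdst_in_W[OF r] by simp
    qed
  qed
qed

lemma potential_le_height_potential:
  "feasible_potential N A x p \<Longrightarrow> p v \<le> height_potential x p v"
  unfolding height_potential_def using potential_le_lasso_height[of x p v]
  unfolding feasible_potential_def by auto

lemma cheapest_aug_path_cost_le:
  assumes "cheapest_aug_path N A W x s f" and "s \<in> W" and "s \<noteq> \<tau>"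
  shows "aug_cost N A x f \<le> lasso_height x s"
proof (rule lasso_height_greatest[OF assms(2,3)])
  fix P C
  assume "lasso x s P C"
  then obtain g where "aug_path N A W x s g" and "aug_cost N A x g = lasso_cost N P C"
    by (rule lasso_aug_path)
  then show "aug_cost N A x f \<le> lasso_cost N P C"
    using assms(1) unfolding cheapest_aug_path_def by metis
qed

section \<open>Augmenting along a cheapest path\<close>

lemma frac_aug_support:
  assumes "frac_aug N A W x s f" and "f r > 0"
  shows "r \<in> R x"
proof (rule ccontr)
  assume "r \<notin> R x"
  then have "f r = 0"
    using assms(1) unfolding frac_aug_def by blast
  with assms(2) show False
    by simp
qed

lemma new_res_edge_reverses_support:
  assumes fa: "frac_aug N A W x s f" and \<theta>: "\<theta> \<ge> 0"
    and new: "(e, b) \<in> R (augment N x \<theta> f)" "(e, b) \<notin> R x"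
  shows "f (e, \<not> b) > 0"
proof -
  have f_nonneg: "f r \<ge> 0" for r
    using fa unfolding frac_aug_def by blast
  have e: "e \<in> A"
    using res_edge_in_A[OF new(1)] by simp
  then have gain: "gain N e > 0"
    using cost_gain_pos by blast
  show ?thesis
  proof (cases b)
    case True
    then have "ereal (augment N x \<theta> f e) < cap N e" "\<not> ereal (x e) < cap N e"
      using new e unfolding res_edges_def by auto
    then have "ereal (augment N x \<theta> f e) < ereal (x e)"
      by (meson less_le_trans not_less)
    then have "\<theta> * f (e, True) < \<theta> * f (e, False) / gain N e"
      unfolding augment_def by simp
    moreover have "0 \<le> \<theta> * f (e, True)"
      using \<theta> f_nonneg by simp
    ultimately have "f (e, False) \<noteq> 0"
      by auto
    then show ?thesis
      using True f_nonneg[of "(e, False)"] by simp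
  next
    case False
    then have "augment N x \<theta> f e > x e"
      using new e unfolding res_edges_def by auto
    then have "\<theta> * f (e, False) / gain N e < \<theta> * f (e, True)"
      unfolding augment_def by simp
    moreover have "0 \<le> \<theta> * f (e, False) / gain N e"
      using \<theta> gain f_nonneg by simp
    ultimately have "f (e, True) \<noteq> 0"
      by auto
    then show ?thesis
      using False f_nonneg[of "(e, True)"] by simp
  qed
qed

text \<open>The reverse of a tight edge is tight, which is why feasibility survives augmentation
  along tight edges.\<close>

lemma feasible_potential_augment:
  assumes q: "feasible_potential N A x q" and fa: "frac_aug N A W x s f" and \<theta>: "\<theta> \<ge> 0"
    and tight: "\<And>r. r \<in> R x \<Longrightarrow> f r > 0 \<Longrightarrow> q (rsrc N r) = rcost N r + rgain N r * q (rdst N r)"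
  shows "feasible_potential N A (augment N x \<theta> f) q"
  unfolding feasible_potential_def
proof (intro conjI allI ballI)
  show "0 \<le> q v" for v
    using q unfolding feasible_potential_def by simp
  show "q \<tau> = 0"
    using q unfolding feasible_potential_def by simp
  fix r
  assume r: "r \<in> R (augment N x \<theta> f)"
  obtain e b where eb: "r = (e, b)"
    by (cases r)
  have e: "gain N e > 0" "cost N e > 0"
    using res_edge_in_A[OF r] eb cost_gain_pos by auto
  show "q (rsrc N r) \<le> rcost N r + rgain N r * q (rdst N r)"
  proof (cases "r \<in> R x")
    case True
    then show ?thesis
      using q unfolding feasible_potential_def by blast
  next
    case False
    then have "f (e, \<not> b) > 0"
      using new_res_edge_reverses_support[OF fa \<theta>] r eb by blast
    then have "q (rsrc N (e, \<not> b)) = rcost N (e, \<not> b) + rgain N (e, \<not> b) * q (rdst N (e, \<not> b))"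
      by (intro tight frac_aug_support[OF fa])
    then show ?thesis
      using eb e by (cases b) (simp_all add: field_simps)
  qed
qed

lemma aug_step_potential:
  assumes p: "feasible_potential N A x p" and f: "cheapest_aug_path N A W x s f"
    and s: "s \<in> W" "s \<noteq> \<tau>" and \<theta>: "\<theta> \<ge> 0"
  shows "feasible_potential N A (augment N x \<theta> f) (height_potential x p)"
    and "aug_cost N A x f \<le> height_potential x p s"
proof -
  have q: "feasible_potential N A x (height_potential x p)"
    using feasible_height_potential[OF p] .
  have fa: "frac_aug N A W x s f"
    using f unfolding cheapest_aug_path_def aug_path_def by simp
  show cost: "aug_cost N A x f \<le> height_potential x p s"
    using cheapest_aug_path_cost_le[OF f s] s unfolding height_potential_def by simp
  show "feasible_potential N A (augment N x \<theta> f) (height_potential x p)"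
    using tight_on_support[OF q fa _ cost] s by (intro feasible_potential_augment[OF q fa \<theta>]) auto
qed

lemma sum_res_edges_split:
  assumes "\<And>r. r \<notin> R x \<Longrightarrow> g r = 0"
  shows "(\<Sum>r\<in>{r\<in>R x. P r}. g r)
    = (\<Sum>e\<in>{e\<in>A. P (e, True)}. g (e, True)) + (\<Sum>e\<in>{e\<in>A. P (e, False)}. g (e, False))"
proof -
  have "(\<Sum>r\<in>{r\<in>R x. P r}. g r) = (\<Sum>r\<in>{r \<in> A \<times> UNIV. P r}. g r)"
    using finite_A res_edges_subset[of x] assms by (intro sum.mono_neutral_left) auto
  also have "{r \<in> A \<times> UNIV. P r}
      = (\<lambda>e. (e, True)) ` {e\<in>A. P (e, True)} \<union> (\<lambda>e. (e, False)) ` {e\<in>A. P (e, False)}"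
    unfolding UNIV_bool by auto
  also have "(\<Sum>r\<in>\<dots>. g r) = (\<Sum>e\<in>{e\<in>A. P (e, True)}. g (e, True)) + (\<Sum>e\<in>{e\<in>A. P (e, False)}. g (e, False))"
    using finite_A by (subst sum.union_disjoint) (auto simp: sum.reindex inj_on_def)
  finally show ?thesis .
qed

lemma augment_outside:
  assumes "\<And>r. r \<notin> R x \<Longrightarrow> f r = 0" and "e \<notin> A"
  shows "augment N x \<theta> f e = x e"
proof -
  have "(e, b) \<notin> R x" for b
    using res_edge_in_A[of "(e, b)" x] assms(2) by auto
  then show ?thesis
    unfolding augment_def using assms(1) by simp
qed

lemma outflow_augment:
  assumes fa: "frac_aug N A W x s f" and s: "s \<in> W" "s \<noteq> \<tau>"
    and no_in: "\<And>e. e \<in> A \<Longrightarrow> dst N e \<noteq> s"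
  shows "outflow N A (augment N x \<theta> f) s = outflow N A x s + \<theta>"
proof -
  let ?out = "{e\<in>A. src N e = s}"
  have zero: "\<And>r. r \<notin> R x \<Longrightarrow> f r = 0"
    using fa unfolding frac_aug_def by auto
  have no_in': "{e \<in> A. dst N e = s} = {}"
    using no_in by auto
  have "(\<Sum>r\<in>{r\<in>R x. rsrc N r = s}. f r) = (\<Sum>e\<in>?out. f (e, True))"
    using sum_res_edges_split[of x f "\<lambda>r. rsrc N r = s", OF zero] no_in' by simp
  moreover have "(\<Sum>r\<in>{r\<in>R x. rdst N r = s}. rgain N r * f r) = (\<Sum>e\<in>?out. f (e, False) / gain N e)"
    using sum_res_edges_split[of x "\<lambda>r. rgain N r * f r" "\<lambda>r. rdst N r = s"] zero no_in' by simp
  moreover have "excess x f s = 1"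
    using frac_aug_excess[OF fa] s by simp
  ultimately have one: "(\<Sum>e\<in>?out. f (e, True)) - (\<Sum>e\<in>?out. f (e, False) / gain N e) = 1"
    unfolding excess_def by simp
  have "outflow N A (augment N x \<theta> f) s
      = outflow N A x s + \<theta> * ((\<Sum>e\<in>?out. f (e, True)) - (\<Sum>e\<in>?out. f (e, False) / gain N e))"
    unfolding outflow_def augment_def
    by (simp add: sum.distrib sum_subtractf sum_distrib_left right_diff_distrib)
  then show ?thesis
    unfolding one by simp
qed

lemma step_cost_augment_le:
  assumes fa: "frac_aug N A W x s f" and \<theta>: "\<theta> \<ge> 0"
    and A: "A \<subseteq> edges N" and fin: "finite (edges N)"
  shows "step_cost N x (augment N x \<theta> f) \<le> \<theta> * aug_cost N A x f"
proof -
  have zero: "\<And>r. r \<notin> R x \<Longrightarrow> f r = 0" and f_nonneg: "\<And>r. f r \<ge> 0"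
    using fa unfolding frac_aug_def by auto
  have edge_bound: "cost N e * max 0 (augment N x \<theta> f e - x e)
      \<le> (if e \<in> A then \<theta> * (cost N e * f (e, True)) else 0)" for e
  proof (cases "e \<in> A")
    case True
    then have "gain N e > 0" "cost N e > 0"
      using cost_gain_pos by auto
    moreover have "0 \<le> \<theta> * f (e, False) / gain N e"
      using \<theta> f_nonneg[of "(e, False)"] \<open>gain N e > 0\<close> by simp
    ultimately have "max 0 (augment N x \<theta> f e - x e) \<le> \<theta> * f (e, True)"
      using \<theta> f_nonneg[of "(e, True)"] unfolding augment_def by simp
    then show ?thesis
      using True \<open>cost N e > 0\<close> by (simp add: mult_left_mono mult.left_commute)
  next
    case False
    then show ?thesis
      using augment_outside[OF zero False] by simp
  qed
  have "step_cost N x (augment N x \<theta> f) \<le> (\<Sum>e\<in>edges N. if e \<in> A then \<theta> * (cost N e * f (e, True)) else 0)"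
    unfolding step_cost_def using edge_bound by (rule sum_mono)
  also have "\<dots> = \<theta> * (\<Sum>e\<in>A. cost N e * f (e, True))"
    using fin A by (simp add: sum.inter_restrict[symmetric] Int_absorb1 sum_distrib_left)
  also have "(\<Sum>e\<in>A. cost N e * f (e, True)) = aug_cost N A x f"
    unfolding aug_cost_def using sum_res_edges_split[of x "\<lambda>r. rcost N r * f r" "\<lambda>r. True"] zero
    by simp
  finally show ?thesis .
qed

end

lemma step_cost_triangle:
  assumes "\<And>e. e \<in> edges N \<Longrightarrow> cost N e \<ge> 0"
  shows "step_cost N x z \<le> step_cost N x y + step_cost N y z"
  unfolding step_cost_def sum.distrib[symmetric]
proof (rule sum_mono)
  fix e
  assume "e \<in> edges N"
  then have "cost N e * max 0 (z e - x e) \<le> cost N e * (max 0 (y e - x e) + max 0 (z e - y e))"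
    using assms by (intro mult_left_mono) auto
  then show "cost N e * max 0 (z e - x e) \<le> cost N e * max 0 (y e - x e) + cost N e * max 0 (z e - y e)"
    by (simp only: distrib_left)
qed

context residual_network
begin

lemma aug_step_bound:
  assumes p: "feasible_potential N A y p" and step: "aug_step N A W s y y'"
    and s: "s \<in> W" "s \<noteq> \<tau>" and no_in: "\<And>e. e \<in> A \<Longrightarrow> dst N e \<noteq> s"
    and A: "A \<subseteq> edges N" and fin: "finite (edges N)"
  obtains q where "feasible_potential N A y' q" and "\<And>v. p v \<le> q v"
    and "step_cost N y y' \<le> (outflow N A y' s - outflow N A y s) * q s"
    and "outflow N A y s \<le> outflow N A y' s" and "outflow N A y' s \<le> 1"
    and "\<And>e. e \<notin> A \<Longrightarrow> y' e = y e"
proof -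
  obtain f \<theta> where f: "cheapest_aug_path N A W y s f" and feasible: "feasible_step N A s y f \<theta>"
    and y': "y' = augment N y \<theta> f"
    using step unfolding aug_step_def by blast
  have \<theta>: "\<theta> \<ge> 0"
    using feasible unfolding feasible_step_def by simp
  have fa: "frac_aug N A W y s f"
    using f unfolding cheapest_aug_path_def aug_path_def by simp
  define q where "q = height_potential y p"
  have out: "outflow N A y' s = outflow N A y s + \<theta>"
    unfolding y' using outflow_augment[OF fa s no_in] .
  have "step_cost N y y' \<le> \<theta> * aug_cost N A y f"
    unfolding y' using step_cost_augment_le[OF fa \<theta> A fin] .
  also have "\<dots> \<le> \<theta> * q s"
    unfolding q_def using aug_step_potential(2)[OF p f s \<theta>] \<theta> by (rule mult_left_mono)
  finally have "step_cost N y y' \<le> (outflow N A y' s - outflow N A y s) * q s"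
    unfolding out by (simp add: mult.commute)
  moreover have "feasible_potential N A y' q"
    unfolding q_def y' using aug_step_potential(1)[OF p f s \<theta>] .
  moreover have "\<And>e. e \<notin> A \<Longrightarrow> y' e = y e"
    unfolding y' using augment_outside fa unfolding frac_aug_def by blast
  ultimately show ?thesis
    using that potential_le_height_potential[OF p] feasible out \<theta> y'
    unfolding q_def feasible_step_def by simp
qed

lemma aug_steps_potential:
  assumes p: "feasible_potential N A (ys ! 0) p"
    and steps: "\<And>i. Suc i < length ys \<Longrightarrow> aug_step N A W s (ys ! i) (ys ! Suc i)"
    and s: "s \<in> W" "s \<noteq> \<tau>" and no_in: "\<And>e. e \<in> A \<Longrightarrow> dst N e \<noteq> s"
    and A: "A \<subseteq> edges N" and fin: "finite (edges N)"
    and cost: "\<And>e. e \<in> edges N \<Longrightarrow> cost N e \<ge> 0" and "i < length ys"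
  shows "\<exists>q. feasible_potential N A (ys ! i) q \<and> (\<forall>v. p v \<le> q v) \<and>
    step_cost N (ys ! 0) (ys ! i) \<le> (outflow N A (ys ! i) s - outflow N A (ys ! 0) s) * q s \<and>
    outflow N A (ys ! 0) s \<le> outflow N A (ys ! i) s \<and>
    outflow N A (ys ! i) s \<le> max 1 (outflow N A (ys ! 0) s) \<and>
    (\<forall>e. e \<notin> A \<longrightarrow> (ys ! i) e = (ys ! 0) e)"
  using \<open>i < length ys\<close>
proof (induction i)
  case 0
  show ?case
    using p unfolding step_cost_def by (intro exI[of _ p]) auto
next
  case (Suc i)
  let ?out = "\<lambda>y. outflow N A y s"
  obtain q where q: "feasible_potential N A (ys ! i) q" "\<forall>v. p v \<le> q v"
    "step_cost N (ys ! 0) (ys ! i) \<le> (?out (ys ! i) - ?out (ys ! 0)) * q s"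
    "?out (ys ! 0) \<le> ?out (ys ! i)" "\<forall>e. e \<notin> A \<longrightarrow> (ys ! i) e = (ys ! 0) e"
    using Suc by auto
  obtain q' where q': "feasible_potential N A (ys ! Suc i) q'" "\<And>v. q v \<le> q' v"
    "step_cost N (ys ! i) (ys ! Suc i) \<le> (?out (ys ! Suc i) - ?out (ys ! i)) * q' s"
    "?out (ys ! i) \<le> ?out (ys ! Suc i)" "?out (ys ! Suc i) \<le> 1"
    "\<And>e. e \<notin> A \<Longrightarrow> (ys ! Suc i) e = (ys ! i) e"
    using aug_step_bound[OF q(1) steps[OF Suc.prems] s no_in A fin] by blast
  have "step_cost N (ys ! 0) (ys ! Suc i)
      \<le> step_cost N (ys ! 0) (ys ! i) + step_cost N (ys ! i) (ys ! Suc i)"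
    using cost by (rule step_cost_triangle)
  also have "\<dots> \<le> (?out (ys ! i) - ?out (ys ! 0)) * q' s + (?out (ys ! Suc i) - ?out (ys ! i)) * q' s"
  proof -
    have "(?out (ys ! i) - ?out (ys ! 0)) * q s \<le> (?out (ys ! i) - ?out (ys ! 0)) * q' s"
      using q(4) q'(2) by (intro mult_left_mono) auto
    then show ?thesis
      using q(3) q'(3) by linarith
  qed
  also have "\<dots> = (?out (ys ! Suc i) - ?out (ys ! 0)) * q' s"
    by (simp add: algebra_simps)
  moreover have "\<forall>v. p v \<le> q' v"
    using q(2) q'(2) order_trans by blast
  ultimately show ?case
    using q(4,5) q'(1,4,5,6) by (intro exI[of _ q']) auto
qed

text \<open>Each augmentation costs at most its amount times the new potential of \<open>s\<close>, potentials
  only grow, and the outflow of \<open>s\<close> grows by at most 1 in total.\<close>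

lemma phase_potential:
  assumes p: "feasible_potential N A x0 p" and phase: "phase N A W s x0 x1"
    and s: "s \<in> W" "s \<noteq> \<tau>" and no_in: "\<And>e. e \<in> A \<Longrightarrow> dst N e \<noteq> s"
    and A: "A \<subseteq> edges N" and fin: "finite (edges N)"
    and cost: "\<And>e. e \<in> edges N \<Longrightarrow> cost N e \<ge> 0" and out0: "outflow N A x0 s \<ge> 0"
  obtains p' where "feasible_potential N A x1 p'" and "\<And>v. p v \<le> p' v"
    and "step_cost N x0 x1 \<le> p' s" and "\<And>e. e \<notin> A \<Longrightarrow> x1 e = x0 e"
proof -
  obtain ys where ys: "ys \<noteq> []" "ys ! 0 = x0" "ys ! (length ys - 1) = x1"
    and steps: "\<And>i. Suc i < length ys \<Longrightarrow> aug_step N A W s (ys ! i) (ys ! Suc i)"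
    using phase unfolding phase_def by (auto simp: hd_conv_nth last_conv_nth)
  obtain p' where p': "feasible_potential N A x1 p'" "\<forall>v. p v \<le> p' v"
    "step_cost N x0 x1 \<le> (outflow N A x1 s - outflow N A x0 s) * p' s"
    "outflow N A x1 s \<le> max 1 (outflow N A x0 s)" "\<forall>e. e \<notin> A \<longrightarrow> x1 e = x0 e"
    using aug_steps_potential[OF p[folded ys(2)] steps s no_in A fin cost, of "length ys - 1"] ys
    by auto
  have "(outflow N A x1 s - outflow N A x0 s) * p' s \<le> 1 * p' s"
    using p'(1,4) out0 unfolding feasible_potential_def by (intro mult_right_mono) auto
  then show ?thesis
    using that p' by simp
qed

end

lemma residual_network_at:
  assumes inst: "gnet_instance N B s T"
  shows "residual_network N (edges_at N s T t) (verts_at N s T t)"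
proof -
  have dst_not_future: "\<not> future s T t (dst N e)" if "e \<in> edges N" for e
    using inst that unfolding gnet_instance_def future_def by fastforce
  have sink_not_future: "\<not> future s T t (sink N)"
    using inst unfolding gnet_instance_def future_def by fastforce
  show ?thesis
  proof
    show "finite (edges_at N s T t)" "finite (verts_at N s T t)"
      using inst unfolding gnet_instance_def edges_at_def verts_at_def by auto
    show "sink N \<in> verts_at N s T t"
      using inst sink_not_future unfolding gnet_instance_def verts_at_def by auto
  next
    fix e
    assume "e \<in> edges_at N s T t"
    then have e: "e \<in> edges N" "\<not> future s T t (src N e)"
      unfolding edges_at_def by auto
    then show "src N e \<in> verts_at N s T t \<and> dst N e \<in> verts_at N s T t"
      using inst dst_not_future unfolding gnet_instance_def verts_at_def by auto
    show "cost N e > 0 \<and> gain N e > 0"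
      using inst e(1) unfolding gnet_instance_def by blast
  next
    fix v
    assume v: "v \<in> verts_at N s T t" "v \<noteq> sink N"
    then obtain e where "e \<in> edges N" "src N e = v" "dst N e = sink N" "cap N e = \<infinity>"
      using inst unfolding gnet_instance_def verts_at_def by blast
    with v show "\<exists>e\<in>edges_at N s T t. src N e = v \<and> dst N e = sink N \<and> cap N e = \<infinity>"
      unfolding edges_at_def verts_at_def by blast
  qed
qed

lemma source_not_future:
  assumes "gnet_instance N B s T" and "t \<in> {1..T}"
  shows "\<not> future s T t (s t)"
  using assms inj_onD[of s "{1..T}" t] unfolding gnet_instance_def future_def by fastforce

lemma edges_at_Suc:
  assumes "e \<in> edges_at N s T (Suc t)" and "src N e \<noteq> s (Suc t)"
  shows "e \<in> edges_at N s T t"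
  using assms unfolding edges_at_def future_def by auto (metis Suc_lessI greaterThanAtMost_iff)

lemma edges_at_mono: "edges_at N s T t \<subseteq> edges_at N s T (Suc t)"
  unfolding edges_at_def future_def by auto

text \<open>The residual edges that appear on arrival of \<open>s\<^sub>t\<^sub>+\<^sub>1\<close> leave it and carry no flow, so
  they are forward edges; since no edge enters \<open>s\<^sub>t\<^sub>+\<^sub>1\<close>, giving it potential 0 keeps the
  potential feasible.\<close>

lemma arrival_potential:
  assumes inst: "gnet_instance N B s T" and t: "Suc t \<le> T"
    and p: "feasible_potential N (edges_at N s T t) x p"
    and x: "\<And>e. e \<notin> edges_at N s T t \<Longrightarrow> x e = 0"
  shows "feasible_potential N (edges_at N s T (Suc t)) x (p(s (Suc t) := 0))"
  unfolding feasible_potential_def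
proof (intro conjI allI ballI)
  have s: "s (Suc t) \<noteq> sink N" "\<And>e. e \<in> edges N \<Longrightarrow> dst N e \<noteq> s (Suc t)"
    using inst t unfolding gnet_instance_def by auto
  show "0 \<le> (p(s (Suc t) := 0)) v" for v
    using p unfolding feasible_potential_def by simp
  show "(p(s (Suc t) := 0)) (sink N) = 0"
    using p s unfolding feasible_potential_def by simp
  fix r
  assume r: "r \<in> res_edges N (edges_at N s T (Suc t)) x"
  obtain e b where eb: "r = (e, b)"
    by (cases r)
  have e: "e \<in> edges_at N s T (Suc t)"
    using r eb unfolding res_edges_def by auto
  then have "e \<in> edges N"
    unfolding edges_at_def by simp
  interpret residual_network N "edges_at N s T (Suc t)" "verts_at N s T (Suc t)"
    using residual_network_at[OF inst] .
  show "(p(s (Suc t) := 0)) (rsrc N r) \<le> rcost N r + rgain N r * (p(s (Suc t) := 0)) (rdst N r)"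
  proof (cases "src N e = s (Suc t)")
    case True
    have "e \<notin> edges_at N s T t"
      using True t unfolding edges_at_def future_def by auto
    then have b
      using r eb x unfolding res_edges_def by auto
    then show ?thesis
      using True eb p rcost_nonneg[OF r] rgain_pos[OF r]
      unfolding feasible_potential_def by simp
  next
    case False
    then have "r \<in> res_edges N (edges_at N s T t) x"
      using r eb edges_at_Suc[OF e] unfolding res_edges_def by auto
    then have "p (rsrc N r) \<le> rcost N r + rgain N r * p (rdst N r)"
      using p unfolding feasible_potential_def by blast
    moreover have "rsrc N r \<noteq> s (Suc t)" "rdst N r \<noteq> s (Suc t)"
      using False s(2)[OF \<open>e \<in> edges N\<close>] eb by (cases b; simp)+
    ultimately show ?thesis
      by simp
  qed
qed

lemma time_step_potential:
  assumes inst: "gnet_instance N B s T" and run: "alg_run N s T X" and t: "Suc t \<le> T"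
    and p: "feasible_potential N (edges_at N s T t) (X t) p"
    and X_off: "\<And>e. e \<notin> edges_at N s T t \<Longrightarrow> X t e = 0"
  obtains p' where "feasible_potential N (edges_at N s T (Suc t)) (X (Suc t)) p'"
    and "\<And>v. (p(s (Suc t) := 0)) v \<le> p' v" and "step_cost N (X t) (X (Suc t)) \<le> p' (s (Suc t))"
    and "\<And>e. e \<notin> edges_at N s T (Suc t) \<Longrightarrow> X (Suc t) e = 0"
proof -
  let ?A = "edges_at N s T (Suc t)" and ?W = "verts_at N s T (Suc t)"
  interpret residual_network N ?A ?W
    using residual_network_at[OF inst] .
  have t': "Suc t \<in> {1..T}"
    using t by simp
  have s: "s (Suc t) \<in> ?W" "s (Suc t) \<noteq> \<tau>" "\<And>e. e \<in> ?A \<Longrightarrow> dst N e \<noteq> s (Suc t)"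
    using inst t' source_not_future[OF inst t'] unfolding gnet_instance_def verts_at_def edges_at_def
    by auto
  have E: "?A \<subseteq> edges N" "finite (edges N)" "\<And>e. e \<in> edges N \<Longrightarrow> cost N e \<ge> 0"
    using inst unfolding gnet_instance_def edges_at_def by (auto simp: less_imp_le)
  have "future s T t (s (Suc t))"
    unfolding future_def using t by auto
  then have "X t e = 0" if "src N e = s (Suc t)" for e
    using X_off that unfolding edges_at_def by auto
  then have out0: "0 \<le> outflow N ?A (X t) (s (Suc t))"
    unfolding outflow_def by simp
  have "phase N ?A ?W (s (Suc t)) (X (Suc t - 1)) (X (Suc t))"
    using run t' unfolding alg_run_def by blast
  then have phase: "phase N ?A ?W (s (Suc t)) (X t) (X (Suc t))"
    by simp
  have arrival: "feasible_potential N ?A (X t) (p(s (Suc t) := 0))"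
    using X_off by (intro arrival_potential[OF inst t p]) auto
  obtain p' where p': "feasible_potential N ?A (X (Suc t)) p'"
    "\<And>v. (p(s (Suc t) := 0)) v \<le> p' v" "step_cost N (X t) (X (Suc t)) \<le> p' (s (Suc t))"
    "\<And>e. e \<notin> ?A \<Longrightarrow> X (Suc t) e = X t e"
    using phase_potential[OF arrival phase s E out0] by blast
  have "X (Suc t) e = 0" if "e \<notin> ?A" for e
    using p'(4)[OF that] X_off edges_at_mono[of N s T t] that by auto
  then show ?thesis
    using that[OF p'(1-3)] by blast
qed

lemma run_potential:
  assumes inst: "gnet_instance N B s T" and run: "alg_run N s T X" and "t \<le> T"
  shows "\<exists>p. feasible_potential N (edges_at N s T t) (X t) p \<and>
     (\<forall>e. e \<notin> edges_at N s T t \<longrightarrow> X t e = 0) \<and>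
     (\<Sum>i=1..t. step_cost N (X (i - 1)) (X i)) \<le> (\<Sum>i=1..t. p (s i))"
  using \<open>t \<le> T\<close>
proof (induction t)
  case 0
  interpret residual_network N "edges_at N s T 0" "verts_at N s T 0"
    using residual_network_at[OF inst] .
  have "feasible_potential N (edges_at N s T 0) (X 0) (\<lambda>_. 0)"
    unfolding feasible_potential_def using rcost_nonneg by auto
  then show ?case
    using run unfolding alg_run_def by auto
next
  case (Suc t)
  obtain p where p: "feasible_potential N (edges_at N s T t) (X t) p"
    and X_off: "\<forall>e. e \<notin> edges_at N s T t \<longrightarrow> X t e = 0"
    and cost: "(\<Sum>i=1..t. step_cost N (X (i - 1)) (X i)) \<le> (\<Sum>i=1..t. p (s i))"
    using Suc by auto
  obtain p' where p': "feasible_potential N (edges_at N s T (Suc t)) (X (Suc t)) p'"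
    "\<And>v. (p(s (Suc t) := 0)) v \<le> p' v" "step_cost N (X t) (X (Suc t)) \<le> p' (s (Suc t))"
    "\<And>e. e \<notin> edges_at N s T (Suc t) \<Longrightarrow> X (Suc t) e = 0"
    using time_step_potential[OF inst run Suc.prems p] X_off by blast
  have "s i \<noteq> s (Suc t)" if "i \<in> {1..t}" for i
    using inst Suc.prems that inj_onD[of s "{1..T}" i "Suc t"] unfolding gnet_instance_def by auto
  then have "(\<Sum>i=1..t. p (s i)) = (\<Sum>i=1..t. (p(s (Suc t) := 0)) (s i))"
    by (intro sum.cong) auto
  also have "\<dots> \<le> (\<Sum>i=1..t. p' (s i))"
    by (intro sum_mono p'(2))
  finally have "(\<Sum>i=1..Suc t. step_cost N (X (i - 1)) (X i)) \<le> (\<Sum>i=1..Suc t. p' (s i))"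
    using cost p'(3) by simp
  then show ?case
    using p'(1,4) by blast
qed

theorem lemma3:
  fixes N :: "('v, 'e) gnet" and B :: real and s :: "nat \<Rightarrow> 'v" and T :: nat
    and X :: "nat \<Rightarrow> 'e \<Rightarrow> real"
  assumes "gnet_instance N B s T"
    and "alg_run N s T X"
  shows "(\<Sum>t=1..T. step_cost N (X (t - 1)) (X t))
           \<le> (\<Sum>t=1..T. height N (edges N) (verts N) (X T) (s t))"
proof -
  have final: "edges_at N s T T = edges N" "verts_at N s T T = verts N"
    unfolding edges_at_def verts_at_def future_def by auto
  interpret residual_network N "edges N" "verts N"
    using residual_network_at[OF assms(1), of T] unfolding final .
  obtain p where p: "feasible_potential N (edges N) (X T) p"
    and cost: "(\<Sum>t=1..T. step_cost N (X (t - 1)) (X t)) \<le> (\<Sum>t=1..T. p (s t))"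
    using run_potential[OF assms order_refl] unfolding final by blast
  have "p (s t) \<le> height N (edges N) (verts N) (X T) (s t)" if "t \<in> {1..T}" for t
    using assms(1) that unfolding gnet_instance_def by (intro potential_le_height[OF p]) auto
  then have "(\<Sum>t=1..T. p (s t)) \<le> (\<Sum>t=1..T. height N (edges N) (verts N) (X T) (s t))"
    by (rule sum_mono)
  with cost show ?thesis
    by linarith
qed

end
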